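(* If $(\bar\lambda,\bar\mu)\in[\lambda_0,\infty)\times(0,\infty)$ satisfies $\Xi(\bar\lambda,\bar\mu)=0$, then $\Xi_\lambda(\bar\lambda,\bar\mu)>0$ and $\Xi_\mu(\bar\lambda,\bar\mu)<0$.
   Context: Setting: - $g>0$, $\sigma>0$, and $p_0<p_1<0$. - $\gamma=\gamma_1$ on $[p_0,p_1)$ and $\gamma=\gamma_2$ on $(p_1,0]$, with $\gamma_1\in C^\alpha([p_0,p_1])$ and $\gamma_2\in C^\alpha([p_1,0])$. - $\Gamma(p)=\int_0^p\gamma$, and $a(p;\lambda)=\sqrt{\lambda-2\Gamma(p)}$ for $\lambda>2\max_{[p_0,0]}\Gamma$. - $\mathfrak z(\cdot;\lambda,\mu)$ solves $(a^3\mathfrak z')'-\mu a\mathfrak z=0$ on $(p_0,0)$ with $\mathfrak z(p_0)=0$, $\mathfrak z'(p_0)=1$. - $\Xi(\lambda,\mu):=\lambda^{3/2}\mathfrak z'(0;\lambda,\mu)-(g+\sigma\mu)\mathfrak z(0;\lambda,\mu)$, a real-analytic function of $(\lambda,\mu)$; subscripts denote partial derivatives. - $\lambda_0$ is the unique $\lambda>2\max\Gamma$ with $\frac1g=\int_{p_0}^0a(p;\lambda)^{-3}dp$. *)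

theory Defs
  imports "HOL-Analysis.Analysis"
begin

definition holder_on :: "real \<Rightarrow> real set \<Rightarrow> (real \<Rightarrow> real) \<Rightarrow> bool" where
  "holder_on \<alpha> S f \<longleftrightarrow> continuous_on S f \<and>
     (\<exists>C. \<forall>x\<in>S. \<forall>y\<in>S. \<bar>f x - f y\<bar> \<le> C * \<bar>x - y\<bar> powr \<alpha>)"

text \<open>Gamma(p) = integral from 0 to p of gamma (for p <= 0).\<close>
definition Gam :: "(real \<Rightarrow> real) \<Rightarrow> real \<Rightarrow> real" where
  "Gam \<gamma> p = - integral {p..0} \<gamma>"

definition aa :: "(real \<Rightarrow> real) \<Rightarrow> real \<Rightarrow> real \<Rightarrow> real" where
  "aa \<gamma> lam p = sqrt (lam - 2 * Gam \<gamma> p)"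

text \<open>z solves (a^3 z')' - mu a z = 0 on [p0,0] with z(p0)=0, z'(p0)=1; z' is its derivative.\<close>
definition zsol :: "(real \<Rightarrow> real) \<Rightarrow> real \<Rightarrow> real \<Rightarrow> real \<Rightarrow> (real \<Rightarrow> real) \<Rightarrow> (real \<Rightarrow> real) \<Rightarrow> bool" where
  "zsol \<gamma> p0 lam mu z z' \<longleftrightarrow>
     z p0 = 0 \<and> z' p0 = 1 \<and>
     (\<forall>p\<in>{p0..0}. (z has_real_derivative z' p) (at p within {p0..0})) \<and>
     (\<forall>p\<in>{p0..0}. ((\<lambda>q. (aa \<gamma> lam q)^3 * z' q) has_real_derivative mu * aa \<gamma> lam p * z p)
                     (at p within {p0..0}))"

definition zval :: "(real \<Rightarrow> real) \<Rightarrow> real \<Rightarrow> real \<Rightarrow> real \<Rightarrow> real \<Rightarrow> real" where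
  "zval \<gamma> p0 lam mu p = (THE v. \<exists>z z'. zsol \<gamma> p0 lam mu z z' \<and> z p = v)"

definition zder :: "(real \<Rightarrow> real) \<Rightarrow> real \<Rightarrow> real \<Rightarrow> real \<Rightarrow> real \<Rightarrow> real" where
  "zder \<gamma> p0 lam mu p = (THE v. \<exists>z z'. zsol \<gamma> p0 lam mu z z' \<and> z' p = v)"

definition Xi :: "(real \<Rightarrow> real) \<Rightarrow> real \<Rightarrow> real \<Rightarrow> real \<Rightarrow> real \<Rightarrow> real \<Rightarrow> real" where
  "Xi \<gamma> g \<sigma> p0 lam mu = lam powr (3/2) * zder \<gamma> p0 lam mu 0 - (g + \<sigma> * mu) * zval \<gamma> p0 lam mu 0"

end

theory Submission
  imports Defs
begin

text \<open>With w = a^3 z' the equation becomes the first-order system z' = w / a^3, w' = mu a z, with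
  z(p0) = 0, w(p0) = a(p0)^3 and Xi = w(0) - (g + sigma mu) z(0). Picard iteration gives the solution
  together with z >= 0 and w >= w(p0) > 0. For two parameter values the Wronskian of the two solutions
  at 0 is an integral of the coefficient differences, so at a zero of Xi the difference quotients of Xi
  in lambda and in mu are integrals of the solutions; a Gronwall estimate makes the solutions depend
  uniformly continuously on the parameters, and in the limit
  z(0) Xi_lambda = int (3 w^2 / (2 a^5) + mu z^2 / (2 a)) > 0 and z(0) Xi_mu = int a z^2 - sigma z(0)^2.
  The latter is negative by the energy identity z(0) w(0) = int w^2 / a^3 + mu int a z^2, the boundary
  relation w(0) = (g + sigma mu) z(0), and the strict Cauchy-Schwarz inequality
  z(0)^2 = (int w / a^3)^2 < int a^-3 * int w^2 / a^3 <= (1/g) int w^2 / a^3, where the last step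
  uses lambda >= lambda0.\<close>

section \<open>Integrals, uniform limits and difference quotients\<close>

lemma gronwall_affine:
  fixes E E' :: "real \<Rightarrow> real"
  assumes "a \<le> b" "continuous_on {a..b} E"
    and "\<And>p. p \<in> {a<..<b} \<Longrightarrow> (E has_real_derivative E' p) (at p)"
    and "\<And>p. p \<in> {a<..<b} \<Longrightarrow> E' p \<le> L * E p + \<delta>"
    and "0 \<le> L" "0 \<le> \<delta>" "p \<in> {a..b}"
  shows "E p \<le> (E a + \<delta> * (p - a)) * exp (L * (p - a))"
proof (cases "p = a")
  case True then show ?thesis by simp
next
  case False
  with assms have ap: "a < p" "p \<le> b" by auto
  define F where "F x = exp (- L * (x - a)) * E x - \<delta> * (x - a)" for x
  have cF: "continuous_on {a..p} F"
    unfolding F_def using assms(2) ap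
    by (intro continuous_intros) (auto intro: continuous_on_subset)
  have dF: "(F has_real_derivative (exp (- L * (x - a)) * (E' x - L * E x) - \<delta>)) (at x)"
    if "a < x" "x < p" for x
  proof -
    have "(E has_real_derivative E' x) (at x)" using assms(3) that ap by auto
    then show ?thesis unfolding F_def
      by (auto intro!: derivative_eq_intros simp: algebra_simps)
  qed
  have diff: "\<And>x. a < x \<Longrightarrow> x < p \<Longrightarrow> F differentiable (at x)"
    using dF real_differentiable_def by blast
  obtain l x where x: "a < x" "x < p" and dl: "(F has_real_derivative l) (at x)"
    and eq: "F p - F a = (p - a) * l"
    using MVT[OF ap(1) cF diff] by blast
  have l: "l = exp (- L * (x - a)) * (E' x - L * E x) - \<delta>"
    using DERIV_unique[OF dl dF[OF x]] .
  have "E' x - L * E x \<le> \<delta>" using assms(4)[of x] x ap by auto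
  then have "exp (- L * (x - a)) * (E' x - L * E x) \<le> exp (- L * (x - a)) * \<delta>"
    by (intro mult_left_mono) auto
  also have "\<dots> \<le> \<delta>" using assms x by (intro mult_left_le_one_le) auto
  finally have "l \<le> 0" using l by simp
  then have "(p - a) * l \<le> 0" using ap by (intro mult_nonneg_nonpos) auto
  then have "F p \<le> F a" using eq by linarith
  then have "exp (- L * (p - a)) * E p \<le> E a + \<delta> * (p - a)" by (simp add: F_def)
  then have "exp (L * (p - a)) * (exp (- L * (p - a)) * E p) \<le> exp (L * (p - a)) * (E a + \<delta> * (p - a))"
    by (intro mult_left_mono) auto
  moreover have "exp (L * (p - a)) * (exp (- L * (p - a)) * E p) = E p"
    by (simp add: exp_minus)
  ultimately show ?thesis by (simp only: mult.commute)
qed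

lemma bounded_continuous_image_Icc:
  fixes f :: "real \<Rightarrow> real"
  assumes "continuous_on {a..b} f"
  shows "bounded (f ` {a..b})"
  by (rule compact_imp_bounded[OF compact_continuous_image[OF assms compact_Icc]])

lemma continuous_on_Icc_bound:
  fixes f :: "real \<Rightarrow> real"
  assumes "continuous_on {a..b} f"
  obtains M where "M > 0" "\<And>x. x \<in> {a..b} \<Longrightarrow> \<bar>f x\<bar> \<le> M"
  using bounded_continuous_image_Icc[OF assms] that by (auto simp: bounded_pos)

lemma has_integral_exp_affine:
  fixes K :: real
  assumes "K > 0" "a \<le> p"
  shows "((\<lambda>s. exp (K * (s - a))) has_integral (exp (K * (p - a)) - 1) / K) {a..p}"
proof -
  have "((\<lambda>s. exp (K * (s - a))) has_integral (exp (K * (p - a)) / K - exp (K * (a - a)) / K)) {a..p}"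
  proof (rule fundamental_theorem_of_calculus[OF assms(2)])
    fix x assume "x \<in> {a..p}"
    show "((\<lambda>s. exp (K * (s - a)) / K) has_vector_derivative exp (K * (x - a))) (at x within {a..p})"
      unfolding has_real_derivative_iff_has_vector_derivative[symmetric]
      using assms by (auto intro!: derivative_eq_intros)
  qed
  then show ?thesis by (simp add: diff_divide_distrib)
qed

lemma abs_integral_le_has_integral:
  fixes f g :: "real \<Rightarrow> real"
  assumes "continuous_on {a..p} f" "(g has_integral I) {a..p}"
    and "\<And>s. s \<in> {a..p} \<Longrightarrow> \<bar>f s\<bar> \<le> g s"
  shows "\<bar>integral {a..p} f\<bar> \<le> I"
proof -
  have "norm (integral {a..p} f) \<le> integral {a..p} g"
    using assms by (intro integral_norm_bound_integral) (auto intro: integrable_continuous_real)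
  then show ?thesis using assms(2) by (simp add: integral_unique)
qed

lemma integral_pos_continuous:
  fixes f :: "real \<Rightarrow> real"
  assumes "continuous_on {a..b} f" "a < b" "\<And>x. x \<in> {a..b} \<Longrightarrow> 0 \<le> f x" "x \<in> {a..b}" "0 < f x"
  shows "0 < integral {a..b} f"
proof -
  have "0 \<le> integral {a..b} f"
    using assms by (intro Henstock_Kurzweil_Integration.integral_nonneg integrable_continuous_real) auto
  moreover have "integral {a..b} f \<noteq> 0"
    using integral_eq_0_iff[OF assms(1,2,3)] assms(4,5) by auto
  ultimately show ?thesis by linarith
qed

lemma integral_weighted_square_gt:
  fixes f w :: "real \<Rightarrow> real"
  assumes ab: "a < b" and cf: "continuous_on {a..b} f" and cw: "continuous_on {a..b} w"
    and fpos: "\<And>p. p \<in> {a..b} \<Longrightarrow> 0 < f p"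
    and x: "x \<in> {a..b}" and y: "y \<in> {a..b}" and wxy: "w x \<noteq> w y"
  shows "(integral {a..b} (\<lambda>p. f p * w p))\<^sup>2 < integral {a..b} f * integral {a..b} (\<lambda>p. f p * (w p)\<^sup>2)"
proof -
  define F where "F = integral {a..b} f"
  define I where "I = integral {a..b} (\<lambda>p. f p * w p)"
  define E where "E = integral {a..b} (\<lambda>p. f p * (w p)\<^sup>2)"
  define m where "m = I / F"
  have F: "0 < F"
    unfolding F_def using fpos x by (intro integral_pos_continuous[OF cf ab _ x]) (auto intro: less_imp_le)
  have hf: "(f has_integral F) {a..b}" "((\<lambda>p. f p * w p) has_integral I) {a..b}"
      "((\<lambda>p. f p * (w p)\<^sup>2) has_integral E) {a..b}"
    unfolding F_def I_def E_def using cf cw by (auto intro!: integrable_integral integrable_continuous_real continuous_intros)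
  have "((\<lambda>p. f p * (w p)\<^sup>2 - (2 * m) * (f p * w p) + m\<^sup>2 * f p) has_integral E - (2 * m) * I + m\<^sup>2 * F) {a..b}"
    by (intro has_integral_add has_integral_diff has_integral_mult_right hf)
  moreover have "(\<lambda>p. f p * (w p)\<^sup>2 - (2 * m) * (f p * w p) + m\<^sup>2 * f p) = (\<lambda>p. f p * (w p - m)\<^sup>2)"
    by (simp add: fun_eq_iff power2_eq_square algebra_simps)
  moreover have "E - (2 * m) * I + m\<^sup>2 * F = E - I\<^sup>2 / F"
    unfolding m_def using F by (simp add: field_simps power2_eq_square)
  ultimately have eq: "integral {a..b} (\<lambda>p. f p * (w p - m)\<^sup>2) = E - I\<^sup>2 / F"
    by (simp add: integral_unique)
  obtain u where u: "u \<in> {a..b}" "w u \<noteq> m"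
    using x y wxy by (cases "w x = m") auto
  have "0 < integral {a..b} (\<lambda>p. f p * (w p - m)\<^sup>2)"
  proof (rule integral_pos_continuous[OF _ ab _ u(1)])
    show "continuous_on {a..b} (\<lambda>p. f p * (w p - m)\<^sup>2)" using cf cw by (intro continuous_intros)
    show "0 \<le> f p * (w p - m)\<^sup>2" if "p \<in> {a..b}" for p using fpos[OF that] by simp
    show "0 < f u * (w u - m)\<^sup>2" using fpos[OF u(1)] u(2) by simp
  qed
  then have "I\<^sup>2 / F < E" using eq by linarith
  then show ?thesis using F unfolding F_def I_def E_def by (simp add: divide_less_eq mult.commute)
qed

lemma tendsto_integral_uniform_limit:
  fixes f :: "'b \<Rightarrow> real \<Rightarrow> real"
  assumes u: "uniform_limit {a..b} f g F" and ab: "a \<le> b"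
    and i: "\<forall>\<^sub>F t in F. continuous_on {a..b} (f t)" and g: "continuous_on {a..b} g"
  shows "((\<lambda>t. integral {a..b} (f t)) \<longlongrightarrow> integral {a..b} g) F"
proof (rule tendstoI)
  fix e :: real assume e: "e > 0"
  define e' where "e' = e / (b - a + 1)"
  have e': "e' > 0" using e ab by (simp add: e'_def)
  have ev: "\<forall>\<^sub>F t in F. \<forall>x\<in>{a..b}. dist (f t x) (g x) < e'"
    using u e' by (auto simp: uniform_limit_iff)
  show "\<forall>\<^sub>F t in F. dist (integral {a..b} (f t)) (integral {a..b} g) < e"
    using ev i
  proof eventually_elim
    case (elim t)
    have "integral {a..b} (f t) - integral {a..b} g = integral {a..b} (\<lambda>x. f t x - g x)"
      using elim g by (intro integral_diff[symmetric] integrable_continuous_real) auto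
    moreover have "norm (integral {a..b} (\<lambda>x. f t x - g x)) \<le> integral {a..b} (\<lambda>x. e')"
      using elim g
      by (intro integral_norm_bound_integral integrable_continuous_real continuous_intros)
         (auto simp: dist_real_def less_imp_le)
    moreover have "integral {a..b} (\<lambda>x. e') = e' * (b - a)" using ab by simp
    moreover have "e' * (b - a) < e"
      using e ab unfolding e'_def by (simp add: field_simps)
    ultimately show ?case using ab by (simp add: dist_real_def mult.commute)
  qed
qed

lemma tendsto_integral_mult_uniform_limit:
  fixes Y :: "nat \<Rightarrow> real \<Rightarrow> real"
  assumes u: "uniform_limit {a..b} Y Yl sequentially"
    and cY: "\<And>n. continuous_on {a..b} (Y n)" and c\<alpha>: "continuous_on {a..b} \<alpha>"
    and p: "p \<in> {a..b}"
  shows "((\<lambda>n. integral {a..p} (\<lambda>s. \<alpha> s * Y n s)) \<longlongrightarrow> integral {a..p} (\<lambda>s. \<alpha> s * Yl s)) sequentially"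
proof -
  have sub: "{a..p} \<subseteq> {a..b}" using p by auto
  have cYl: "continuous_on {a..b} Yl"
    by (rule uniform_limit_theorem[OF _ u]) (auto simp: cY)
  have u': "uniform_limit {a..p} Y Yl sequentially"
    using uniform_limit_on_subset[OF u sub] .
  have "uniform_limit {a..p} (\<lambda>n s. \<alpha> s * Y n s) (\<lambda>s. \<alpha> s * Yl s) sequentially"
  proof (rule uniform_lim_mult[OF uniform_limit_const u'])
    show "bounded (\<alpha> ` {a..p})" using bounded_continuous_image_Icc[OF continuous_on_subset[OF c\<alpha> sub]] .
    show "bounded (Yl ` {a..p})" using bounded_continuous_image_Icc[OF continuous_on_subset[OF cYl sub]] .
  qed
  then show ?thesis
    by (rule tendsto_integral_uniform_limit)
       (use p continuous_on_subset[OF cY sub] continuous_on_subset[OF c\<alpha> sub] continuous_on_subset[OF cYl sub]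
         in \<open>auto intro!: continuous_intros always_eventually\<close>)
qed

lemma uniform_limit_tendsto_const_on:
  assumes "(g \<longlongrightarrow> l) F"
  shows "uniform_limit S (\<lambda>t p. g t) (\<lambda>p. l) F"
  using tendstoD[OF assms] by (auto intro!: uniform_limitI elim: eventually_mono)

lemma eventually_neq_at: "\<forall>\<^sub>F t in at x. t \<noteq> x"
  by (simp add: eventually_at_filter)

lemma uniform_limit_from_quotient:
  fixes f :: "real \<Rightarrow> real \<Rightarrow> real"
  assumes u: "uniform_limit S (\<lambda>t p. (f t p - f0 p) / (t - x)) L (at x)" and b: "bounded (L ` S)"
  shows "uniform_limit S f f0 (at x)"
proof -
  have "uniform_limit S (\<lambda>t p. t - x) (\<lambda>p. 0) (at x)"
    by (intro uniform_limit_tendsto_const_on tendsto_eq_intros) auto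
  then have lim: "uniform_limit S (\<lambda>t p. (t - x) * ((f t p - f0 p) / (t - x)) + f0 p) (\<lambda>p. 0 * L p + f0 p) (at x)"
    using b by (intro uniform_limit_add uniform_lim_mult[OF _ u] uniform_limit_const) (auto simp: image_constant_conv)
  have ev: "\<forall>\<^sub>F t in at x. \<forall>p\<in>S. (t - x) * ((f t p - f0 p) / (t - x)) + f0 p = f t p"
    using eventually_neq_at by eventually_elim simp
  show ?thesis using uniform_limit_cong[OF ev, of "\<lambda>p. 0 * L p + f0 p" f0] lim by simp
qed

lemma uniform_difference_quotient:
  fixes \<phi> \<phi>' :: "real \<Rightarrow> real"
  assumes r: "0 < r"
    and d: "\<And>t. t \<in> {s1-r..s2+r} \<Longrightarrow> (\<phi> has_real_derivative \<phi>' t) (at t)"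
    and c: "continuous_on {s1-r..s2+r} \<phi>'" and e: "e > 0"
  shows "\<exists>d>0. \<forall>h s. h \<noteq> 0 \<and> \<bar>h\<bar> < d \<and> s \<in> {s1..s2} \<longrightarrow> \<bar>(\<phi> (s+h) - \<phi> s) / h - \<phi>' s\<bar> \<le> e"
proof -
  have "uniformly_continuous_on {s1-r..s2+r} \<phi>'"
    using compact_uniformly_continuous[OF c compact_Icc] .
  then obtain d0 where d0: "d0 > 0" "\<And>x x'. x \<in> {s1-r..s2+r} \<Longrightarrow> x' \<in> {s1-r..s2+r} \<Longrightarrow> dist x' x < d0 \<Longrightarrow> dist (\<phi>' x') (\<phi>' x) < e"
    unfolding uniformly_continuous_on_def using e by metis
  show ?thesis
  proof (intro exI[of _ "min d0 r"] conjI allI impI)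
    show "min d0 r > 0" using d0 r by simp
    fix h s assume hs: "h \<noteq> 0 \<and> \<bar>h\<bar> < min d0 r \<and> s \<in> {s1..s2}"
    then have s: "s \<in> {s1..s2}" and h: "h \<noteq> 0" "\<bar>h\<bar> < d0" "\<bar>h\<bar> < r" by auto
    obtain \<xi> where \<xi>: "\<bar>\<xi> - s\<bar> < \<bar>h\<bar>" "\<phi> (s+h) - \<phi> s = h * \<phi>' \<xi>"
    proof (cases "h > 0")
      case True
      have "\<exists>z. s < z \<and> z < s + h \<and> \<phi> (s+h) - \<phi> s = (s + h - s) * \<phi>' z"
        using True s h by (intro MVT2) (auto intro!: d)
      then obtain z where "s < z" "z < s + h" "\<phi> (s + h) - \<phi> s = (s + h - s) * \<phi>' z" by blast
      then show ?thesis using that[of z] True by auto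
    next
      case False
      then have hn: "h < 0" using h by auto
      have "\<exists>z. s + h < z \<and> z < s \<and> \<phi> s - \<phi> (s + h) = (s - (s + h)) * \<phi>' z"
        using hn s h by (intro MVT2) (auto intro!: d)
      then obtain z where "s + h < z" "z < s" "\<phi> s - \<phi> (s + h) = (s - (s + h)) * \<phi>' z" by blast
      then show ?thesis using that[of z] hn by (auto simp: algebra_simps)
    qed
    have "(\<phi> (s+h) - \<phi> s) / h = \<phi>' \<xi>" using \<xi> h by simp
    moreover have "dist (\<phi>' \<xi>) (\<phi>' s) < e"
      using \<xi> s h by (intro d0(2)) (auto simp: dist_real_def)
    ultimately show "\<bar>(\<phi> (s+h) - \<phi> s) / h - \<phi>' s\<bar> \<le> e" by (simp add: dist_real_def)
  qed
qed

lemma uniform_limit_shifted_quotient: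
  fixes \<phi> \<phi>' R :: "real \<Rightarrow> real"
  assumes r: "0 < r"
    and d: "\<And>t. t \<in> {s1-r..s2+r} \<Longrightarrow> (\<phi> has_real_derivative \<phi>' t) (at t)"
    and c: "continuous_on {s1-r..s2+r} \<phi>'" and R: "\<And>p. p \<in> S \<Longrightarrow> R p \<in> {s1..s2}"
  shows "uniform_limit S (\<lambda>t p. (\<phi> (R p + (t - x)) - \<phi> (R p)) / (t - x)) (\<lambda>p. \<phi>' (R p)) (at x)"
proof (rule uniform_limitI)
  fix e :: real assume e: "e > 0"
  then obtain d where d: "d > 0" and dq: "\<And>h s. h \<noteq> 0 \<and> \<bar>h\<bar> < d \<and> s \<in> {s1..s2} \<Longrightarrow>
      \<bar>(\<phi> (s+h) - \<phi> s) / h - \<phi>' s\<bar> \<le> e / 2"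
    using uniform_difference_quotient[OF r d c, of "e / 2"] by auto
  show "\<forall>\<^sub>F t in at x. \<forall>p\<in>S. dist ((\<phi> (R p + (t - x)) - \<phi> (R p)) / (t - x)) (\<phi>' (R p)) < e"
    unfolding eventually_at
  proof (intro exI[of _ d] conjI allI impI ballI)
    fix t p assume "t \<in> UNIV" and t: "t \<noteq> x \<and> dist t x < d" and p: "p \<in> S"
    have "\<bar>(\<phi> (R p + (t - x)) - \<phi> (R p)) / (t - x) - \<phi>' (R p)\<bar> \<le> e / 2"
      using t R[OF p] by (intro dq) (auto simp: dist_real_def)
    then show "dist ((\<phi> (R p + (t - x)) - \<phi> (R p)) / (t - x)) (\<phi>' (R p)) < e"
      using e by (simp add: dist_real_def)
  qed (rule d)
qed

lemma has_real_derivative_from_quotient: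
  fixes f Q :: "real \<Rightarrow> real"
  assumes ev: "\<forall>\<^sub>F y in at x. f y - f x = (y - x) * Q y" and Q: "(Q \<longlongrightarrow> D) (at x)"
  shows "(f has_real_derivative D) (at x)"
  unfolding has_field_derivative_iff
proof (rule Lim_transform_eventually[OF Q])
  show "\<forall>\<^sub>F y in at x. Q y = (f y - f x) / (y - x)"
    using eventually_neq_at ev by eventually_elim simp
qed

lemma has_derivative_inverse_sqrt_cube:
  assumes "t > 0"
  shows "((\<lambda>t. 1 / sqrt t ^ 3) has_real_derivative - 3 / (2 * sqrt t ^ 5)) (at t)"
proof -
  have ds: "DERIV sqrt t :> inverse (sqrt t) / 2" using DERIV_real_sqrt assms .
  have dp: "DERIV (\<lambda>x. x^3) (sqrt t) :> 3 * sqrt t ^ 2" using DERIV_pow[of 3 "sqrt t"] by simp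
  have d3: "DERIV (\<lambda>x. sqrt x ^ 3) t :> 3 * sqrt t ^ 2 * (inverse (sqrt t) / 2)"
    using DERIV_chain2[OF dp ds] .
  have "DERIV (\<lambda>x. inverse (sqrt x ^ 3)) t :> - (3 * sqrt t ^ 2 * (inverse (sqrt t) / 2) * inverse ((sqrt t ^ 3) ^ Suc (Suc 0)))"
    using DERIV_inverse_fun[OF d3] assms by simp
  moreover have "- (3 * sqrt t ^ 2 * (inverse (sqrt t) / 2) * inverse ((sqrt t ^ 3) ^ Suc (Suc 0))) = - 3 / (2 * sqrt t ^ 5)"
    using assms by (simp add: field_simps power_eq_if)
  ultimately show ?thesis by (simp add: inverse_eq_divide)
qed

lemma powr_three_halves: "(x::real) > 0 \<Longrightarrow> x powr (3/2) = sqrt x ^ 3"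
proof -
  assume x: "x > 0"
  have "x powr (3/2) = x powr 1 * x powr (1/2)" by (subst powr_add[symmetric]) simp
  also have "\<dots> = x * sqrt x" using x by (simp add: powr_half_sqrt)
  also have "\<dots> = sqrt x ^ 3" using x by (simp add: power3_eq_cube power2_eq_square[symmetric] real_sqrt_pow2
      mult.assoc[symmetric])
  finally show ?thesis .
qed

lemma cross_term_bound:
  fixes e1 e2 x y M :: real
  assumes "\<bar>x\<bar> \<le> M" "\<bar>y\<bar> \<le> M"
  shows "2 * e1 * x * e2 + 2 * e2 * y * e1 \<le> 2 * M * (e1^2 + e2^2)"
proof -
  have "2 * e1 * x * e2 + 2 * e2 * y * e1 = 2 * (e1 * e2) * (x + y)" by (simp add: algebra_simps)
  also have "\<dots> \<le> 2 * \<bar>e1 * e2\<bar> * \<bar>x + y\<bar>"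
    by (metis abs_ge_self abs_mult mult.assoc mult_left_mono zero_le_numeral abs_mult_pos abs_ge_zero)
  also have "\<dots> \<le> 2 * \<bar>e1 * e2\<bar> * (2 * M)"
    using assms by (intro mult_left_mono) auto
  also have "\<dots> \<le> (e1^2 + e2^2) * (2*M)"
    using assms sum_squares_bound[of "\<bar>e1\<bar>" "\<bar>e2\<bar>"] by (intro mult_right_mono) (auto simp: abs_mult)
  finally show ?thesis by (simp add: algebra_simps)
qed

lemma perturbation_term_bound:
  fixes e d w \<epsilon> B :: real
  assumes "\<bar>d\<bar> \<le> \<epsilon>" "\<bar>w\<bar> \<le> B"
  shows "2 * e * (d * w) \<le> e^2 + \<epsilon>^2 * B^2"
proof -
  have "2 * e * (d * w) \<le> 2 * \<bar>e\<bar> * (\<bar>d\<bar> * \<bar>w\<bar>)"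
    by (metis abs_ge_self abs_mult mult.assoc abs_numeral)
  also have "\<dots> \<le> 2 * \<bar>e\<bar> * (\<epsilon> * B)"
    using assms by (intro mult_left_mono mult_mono) auto
  also have "\<dots> \<le> e^2 + (\<epsilon> * B)^2" using sum_squares_bound[of "\<bar>e\<bar>" "\<epsilon> * B"] by simp
  finally show ?thesis by (simp add: power_mult_distrib)
qed

lemma error_derivative_bound:
  fixes \<alpha> \<alpha>' \<beta> \<beta>' z z' w w' M B \<epsilon> :: real
  assumes "\<bar>\<alpha>'\<bar> \<le> M \<and> \<bar>\<beta>'\<bar> \<le> M" "\<bar>\<alpha>' - \<alpha>\<bar> \<le> \<epsilon> \<and> \<bar>\<beta>' - \<beta>\<bar> \<le> \<epsilon>" "\<bar>z\<bar> \<le> B \<and> \<bar>w\<bar> \<le> B"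
  shows "2*(z' - z)*(\<alpha>' * w' - \<alpha> * w) + 2*(w' - w)*(\<beta>' * z' - \<beta> * z)
    \<le> (2*M+1) * ((z' - z)^2 + (w' - w)^2) + 2 * \<epsilon>^2 * B^2"
proof -
  define e1 where "e1 = z' - z"
  define e2 where "e2 = w' - w"
  have "2*(z' - z)*(\<alpha>' * w' - \<alpha> * w) + 2*(w' - w)*(\<beta>' * z' - \<beta> * z) =
      (2 * e1 * \<alpha>' * e2 + 2 * e2 * \<beta>' * e1) + 2 * e1 * ((\<alpha>' - \<alpha>) * w) + 2 * e2 * ((\<beta>' - \<beta>) * z)"
    unfolding e1_def e2_def by (simp add: algebra_simps)
  moreover have "2 * e1 * \<alpha>' * e2 + 2 * e2 * \<beta>' * e1 \<le> 2 * M * (e1^2 + e2^2)"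
    using assms(1) by (intro cross_term_bound) auto
  moreover have "2 * e1 * ((\<alpha>' - \<alpha>) * w) \<le> e1^2 + \<epsilon>^2 * B^2" "2 * e2 * ((\<beta>' - \<beta>) * z) \<le> e2^2 + \<epsilon>^2 * B^2"
    using assms(2,3) by (intro perturbation_term_bound; auto)+
  ultimately show ?thesis unfolding e1_def e2_def by (simp add: algebra_simps)
qed

section \<open>Linear first-order systems\<close>

definition lin_system :: "(real\<Rightarrow>real) \<Rightarrow> (real\<Rightarrow>real) \<Rightarrow> (real\<Rightarrow>real) \<Rightarrow> (real\<Rightarrow>real) \<Rightarrow> real \<Rightarrow> real \<Rightarrow> bool" where
 "lin_system \<alpha> \<beta> z w a b \<longleftrightarrow> (\<forall>p\<in>{a..b}. (z has_real_derivative \<alpha> p * w p) (at p within {a..b}) \<and>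
     (w has_real_derivative \<beta> p * z p) (at p within {a..b}))"

lemma lin_system_continuous:
  assumes "lin_system \<alpha> \<beta> z w a b"
  shows "continuous_on {a..b} z" "continuous_on {a..b} w"
  using assms unfolding lin_system_def by (auto intro!: DERIV_continuous_on)

lemma lin_system_deriv_at:
  assumes "lin_system \<alpha> \<beta> z w a b" "p \<in> {a<..<b}"
  shows "(z has_real_derivative \<alpha> p * w p) (at p)" "(w has_real_derivative \<beta> p * z p) (at p)"
proof -
  have i: "p \<in> interior {a..b}" using assms(2) by auto
  have p: "p \<in> {a..b}" using assms(2) by auto
  show "(z has_real_derivative \<alpha> p * w p) (at p)" "(w has_real_derivative \<beta> p * z p) (at p)"
    using assms(1) p at_within_interior[OF i] unfolding lin_system_def by metis+
qed

lemma lin_system_integral_eq: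
  assumes ab: "a \<le> b" and s1: "lin_system \<alpha> \<beta> z w a b"
  shows "z b - z a = integral {a..b} (\<lambda>p. \<alpha> p * w p)" "w b - w a = integral {a..b} (\<lambda>p. \<beta> p * z p)"
proof -
  have "((\<lambda>p. \<alpha> p * w p) has_integral (z b - z a)) {a..b}"
    using s1 unfolding lin_system_def
    by (intro fundamental_theorem_of_calculus[OF ab]) (auto simp: has_real_derivative_iff_has_vector_derivative[symmetric])
  then show "z b - z a = integral {a..b} (\<lambda>p. \<alpha> p * w p)" by (simp add: integral_unique)
  have "((\<lambda>p. \<beta> p * z p) has_integral (w b - w a)) {a..b}"
    using s1 unfolding lin_system_def
    by (intro fundamental_theorem_of_calculus[OF ab]) (auto simp: has_real_derivative_iff_has_vector_derivative[symmetric])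
  then show "w b - w a = integral {a..b} (\<lambda>p. \<beta> p * z p)" by (simp add: integral_unique)
qed

lemma lin_system_energy:
  assumes ab: "a \<le> b" and s1: "lin_system \<alpha> \<beta> z w a b" and "z a = 0"
  shows "z b * w b = integral {a..b} (\<lambda>p. \<alpha> p * w p ^ 2 + \<beta> p * z p ^ 2)"
proof -
  have "((\<lambda>p. \<alpha> p * w p ^ 2 + \<beta> p * z p ^ 2) has_integral (z b * w b - z a * w a)) {a..b}"
  proof (rule fundamental_theorem_of_calculus[OF ab])
    fix x assume x: "x \<in> {a..b}"
    have "((\<lambda>p. z p * w p) has_real_derivative (\<alpha> x * w x) * w x + z x * (\<beta> x * z x)) (at x within {a..b})"
      using s1 x unfolding lin_system_def by (auto intro!: derivative_eq_intros)
    then show "((\<lambda>p. z p * w p) has_vector_derivative \<alpha> x * w x ^ 2 + \<beta> x * z x ^ 2) (at x within {a..b})"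
      unfolding has_real_derivative_iff_has_vector_derivative[symmetric]
      by (rule DERIV_cong) (simp add: algebra_simps power2_eq_square)
  qed
  then show ?thesis using assms by (simp add: integral_unique)
qed

lemma lin_system_wronskian:
  assumes ab: "a \<le> b" and s1: "lin_system \<alpha> \<beta> z w a b" and s2: "lin_system \<alpha>' \<beta>' z' w' a b"
    and "z a = 0" "z' a = 0"
  shows "z b * w' b - z' b * w b =
    integral {a..b} (\<lambda>p. (\<alpha> p - \<alpha>' p) * w p * w' p + (\<beta>' p - \<beta> p) * z p * z' p)"
proof -
  have "((\<lambda>p. (\<alpha> p - \<alpha>' p) * w p * w' p + (\<beta>' p - \<beta> p) * z p * z' p) has_integral
     ((z b * w' b - z' b * w b) - (z a * w' a - z' a * w a))) {a..b}"
  proof (rule fundamental_theorem_of_calculus[OF ab])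
    fix x assume x: "x \<in> {a..b}"
    have "((\<lambda>p. z p * w' p - z' p * w p) has_real_derivative
      (\<alpha> x * w x) * w' x + z x * (\<beta>' x * z' x) - ((\<alpha>' x * w' x) * w x + z' x * (\<beta> x * z x))) (at x within {a..b})"
      using s1 s2 x unfolding lin_system_def by (auto intro!: derivative_eq_intros)
    then show "((\<lambda>p. z p * w' p - z' p * w p) has_vector_derivative
      (\<alpha> x - \<alpha>' x) * w x * w' x + (\<beta>' x - \<beta> x) * z x * z' x) (at x within {a..b})"
      unfolding has_real_derivative_iff_has_vector_derivative[symmetric]
      by (rule DERIV_cong) (simp add: algebra_simps)
  qed
  then show ?thesis using assms by (simp add: integral_unique)
qed

lemma lin_system_stability:
  assumes ab: "a \<le> b" and s1: "lin_system \<alpha> \<beta> z w a b" and s2: "lin_system \<alpha>' \<beta>' z' w' a b"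
    and M: "\<And>p. p \<in> {a..b} \<Longrightarrow> \<bar>\<alpha>' p\<bar> \<le> M \<and> \<bar>\<beta>' p\<bar> \<le> M"
    and B: "\<And>p. p \<in> {a..b} \<Longrightarrow> \<bar>z p\<bar> \<le> B \<and> \<bar>w p\<bar> \<le> B"
    and eps: "\<And>p. p \<in> {a..b} \<Longrightarrow> \<bar>\<alpha>' p - \<alpha> p\<bar> \<le> \<epsilon> \<and> \<bar>\<beta>' p - \<beta> p\<bar> \<le> \<epsilon>"
    and i1: "\<bar>z' a - z a\<bar> \<le> \<epsilon>" and i2: "\<bar>w' a - w a\<bar> \<le> \<epsilon>"
    and "0 \<le> M" and p: "p \<in> {a..b}"
  shows "(z' p - z p)^2 + (w' p - w p)^2 \<le> \<epsilon>^2 * ((2 + 2 * B^2 * (b - a)) * exp ((2*M+1) * (b - a)))"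
proof -
  define E where "E x = (z' x - z x)^2 + (w' x - w x)^2" for x
  define E' where "E' x = 2*(z' x - z x)*(\<alpha>' x * w' x - \<alpha> x * w x) + 2*(w' x - w x)*(\<beta>' x*z' x - \<beta> x * z x)" for x
  have eps0: "0 \<le> \<epsilon>" using i1 by linarith
  have cE: "continuous_on {a..b} E" unfolding E_def
    using lin_system_continuous[OF s1] lin_system_continuous[OF s2] by (intro continuous_intros)
  have dE: "(E has_real_derivative E' x) (at x)" if "x \<in> {a<..<b}" for x
    unfolding E_def E'_def
    using lin_system_deriv_at[OF s1 that] lin_system_deriv_at[OF s2 that]
    by (auto intro!: derivative_eq_intros simp: algebra_simps)
  have bE: "E' x \<le> (2*M+1) * E x + 2 * \<epsilon>^2 * B^2" if "x \<in> {a<..<b}" for x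
    unfolding E_def E'_def using that M eps B by (intro error_derivative_bound) auto
  have Ea: "E a \<le> 2 * \<epsilon>^2"
  proof -
    have "\<bar>z' a - z a\<bar>^2 \<le> \<epsilon>^2" by (rule power_mono[OF i1]) simp
    then have "(z' a - z a)^2 \<le> \<epsilon>^2" by simp
    moreover have "\<bar>w' a - w a\<bar>^2 \<le> \<epsilon>^2" by (rule power_mono[OF i2]) simp
    then have "(w' a - w a)^2 \<le> \<epsilon>^2" by simp
    ultimately show ?thesis unfolding E_def by simp
  qed
  have "E p \<le> (E a + 2 * \<epsilon>^2 * B^2 * (p - a)) * exp ((2*M+1) * (p - a))"
    by (rule gronwall_affine[OF ab cE dE bE]) (use \<open>0 \<le> M\<close> p in auto)
  also have "\<dots> \<le> (2 * \<epsilon>^2 + 2 * \<epsilon>^2 * B^2 * (b - a)) * exp ((2*M+1) * (b - a))"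
  proof (rule mult_mono)
    have "2 * \<epsilon>^2 * B^2 * (p - a) \<le> 2 * \<epsilon>^2 * B^2 * (b - a)" using p by (intro mult_left_mono) auto
    then show "E a + 2 * \<epsilon>^2 * B^2 * (p - a) \<le> 2 * \<epsilon>^2 + 2 * \<epsilon>^2 * B^2 * (b - a)" using Ea by linarith
    show "exp ((2*M+1) * (p - a)) \<le> exp ((2*M+1) * (b - a))" using p \<open>0 \<le> M\<close> by (auto intro!: mult_left_mono)
    show "0 \<le> 2 * \<epsilon>^2 + 2 * \<epsilon>^2 * B^2 * (b - a)" using ab by auto
  qed auto
  finally show ?thesis unfolding E_def by (simp add: algebra_simps)
qed

lemma lin_system_unique:
  assumes ab: "a \<le> b" and s1: "lin_system \<alpha> \<beta> z w a b" and s2: "lin_system \<alpha> \<beta> z' w' a b"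
    and ca: "continuous_on {a..b} \<alpha>" and cb: "continuous_on {a..b} \<beta>"
    and i: "z' a = z a" "w' a = w a" and p: "p \<in> {a..b}"
  shows "z' p = z p \<and> w' p = w p"
proof -
  obtain M1 where M1: "\<And>x. x \<in> {a..b} \<Longrightarrow> \<bar>\<alpha> x\<bar> \<le> M1" using continuous_on_Icc_bound[OF ca] by blast
  obtain M2 where M2: "\<And>x. x \<in> {a..b} \<Longrightarrow> \<bar>\<beta> x\<bar> \<le> M2" using continuous_on_Icc_bound[OF cb] by blast
  obtain B1 where B1: "\<And>x. x \<in> {a..b} \<Longrightarrow> \<bar>z x\<bar> \<le> B1" using continuous_on_Icc_bound[OF lin_system_continuous(1)[OF s1]] by blast
  obtain B2 where B2: "\<And>x. x \<in> {a..b} \<Longrightarrow> \<bar>w x\<bar> \<le> B2" using continuous_on_Icc_bound[OF lin_system_continuous(2)[OF s1]] by blast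
  have "(z' p - z p)^2 + (w' p - w p)^2 \<le> 0^2 * ((2 + 2 * (max B1 B2)^2 * (b - a)) * exp ((2*(max (max M1 M2) 0)+1) * (b - a)))"
    by (rule lin_system_stability[OF ab s1 s2 _ _ _ _ _ _ p]) (use M1 M2 B1 B2 i in \<open>force+\<close>)
  then have "(z' p - z p)^2 + (w' p - w p)^2 \<le> 0" by simp
  then have "(z' p - z p)^2 + (w' p - w p)^2 = 0"
    using add_nonneg_nonneg[OF zero_le_power2 zero_le_power2, of "z' p - z p" "w' p - w p"] by linarith
  then show ?thesis by (simp add: sum_power2_eq_zero_iff)
qed

lemma lin_system_uniform_limit:
  assumes ab: "a \<le> b" and s: "lin_system \<alpha> \<beta> z w a b"
    and c\<alpha>: "continuous_on {a..b} \<alpha>" and c\<beta>: "continuous_on {a..b} \<beta>"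
    and s': "\<forall>\<^sub>F t in F. lin_system (\<alpha>' t) (\<beta>' t) (z' t) (w' t) a b"
    and u\<alpha>: "uniform_limit {a..b} \<alpha>' \<alpha> F" and u\<beta>: "uniform_limit {a..b} \<beta>' \<beta> F"
    and z0: "((\<lambda>t. z' t a) \<longlongrightarrow> z a) F" and w0: "((\<lambda>t. w' t a) \<longlongrightarrow> w a) F"
  shows "uniform_limit {a..b} z' z F" "uniform_limit {a..b} w' w F"
proof -
  obtain M1 where M1: "\<And>p. p \<in> {a..b} \<Longrightarrow> \<bar>\<alpha> p\<bar> \<le> M1" using continuous_on_Icc_bound[OF c\<alpha>] by blast
  obtain M2 where M2: "\<And>p. p \<in> {a..b} \<Longrightarrow> \<bar>\<beta> p\<bar> \<le> M2" using continuous_on_Icc_bound[OF c\<beta>] by blast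
  obtain B1 where B1: "\<And>p. p \<in> {a..b} \<Longrightarrow> \<bar>z p\<bar> \<le> B1"
    using continuous_on_Icc_bound[OF lin_system_continuous(1)[OF s]] by blast
  obtain B2 where B2: "\<And>p. p \<in> {a..b} \<Longrightarrow> \<bar>w p\<bar> \<le> B2"
    using continuous_on_Icc_bound[OF lin_system_continuous(2)[OF s]] by blast
  define M where "M = max (max M1 M2) 0 + 1"
  define B where "B = max B1 B2"
  define K where "K = (2 + 2 * B^2 * (b - a)) * exp ((2*M+1) * (b - a))"
  have K0: "0 \<le> K" unfolding K_def using ab by auto
  have close: "\<forall>\<^sub>F t in F. \<forall>p\<in>{a..b}. \<bar>z' t p - z p\<bar> < \<epsilon> \<and> \<bar>w' t p - w p\<bar> < \<epsilon>" if "\<epsilon> > 0" for \<epsilon>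
  proof -
    define \<delta> where "\<delta> = min 1 (\<epsilon> / (sqrt K + 1))"
    have sK: "0 \<le> sqrt K" using K0 by simp
    have "0 < \<epsilon> / (sqrt K + 1)" using that sK by (intro divide_pos_pos) linarith+
    then have \<delta>: "0 < \<delta>" "\<delta> \<le> 1" by (simp_all add: \<delta>_def)
    have "\<delta> * sqrt K \<le> \<epsilon> / (sqrt K + 1) * sqrt K" using sK by (intro mult_right_mono) (auto simp: \<delta>_def)
    also have "\<dots> = \<epsilon> * sqrt K / (sqrt K + 1)" by simp
    also have "\<dots> < \<epsilon>" using that sK by (subst pos_divide_less_eq) (linarith, simp add: algebra_simps)
    finally have \<delta>K: "\<delta> * sqrt K < \<epsilon>" .
    show ?thesis
      using s' uniform_limitD[OF u\<alpha> \<delta>(1)] uniform_limitD[OF u\<beta> \<delta>(1)]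
        tendstoD[OF z0 \<delta>(1)] tendstoD[OF w0 \<delta>(1)]
    proof eventually_elim
      case (elim t)
      have dev: "\<bar>\<alpha>' t p - \<alpha> p\<bar> \<le> \<delta> \<and> \<bar>\<beta>' t p - \<beta> p\<bar> \<le> \<delta>" if "p \<in> {a..b}" for p
        using elim(2,3) that by (auto simp: dist_real_def less_imp_le)
      have bnd: "\<bar>\<alpha>' t p\<bar> \<le> M \<and> \<bar>\<beta>' t p\<bar> \<le> M" if "p \<in> {a..b}" for p
        using dev[OF that] M1[OF that] M2[OF that] \<delta>(2) unfolding M_def by auto
      show ?case
      proof
        fix p assume p: "p \<in> {a..b}"
        have st: "(z' t p - z p)^2 + (w' t p - w p)^2 \<le> \<delta>^2 * K"
          unfolding K_def
          by (rule lin_system_stability[OF ab s elim(1) bnd _ dev _ _ _ p])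
             (use elim(4,5) B1 B2 in \<open>auto simp: M_def B_def dist_real_def less_imp_le le_max_iff_disj\<close>)
        have "sqrt (\<delta>^2 * K) = \<delta> * sqrt K" using \<delta>(1) by (simp add: real_sqrt_mult)
        moreover have "sqrt ((z' t p - z p)^2) \<le> sqrt (\<delta>^2 * K)" "sqrt ((w' t p - w p)^2) \<le> sqrt (\<delta>^2 * K)"
          using st by (intro real_sqrt_le_mono; smt (verit) zero_le_power2)+
        ultimately have "\<bar>z' t p - z p\<bar> \<le> \<delta> * sqrt K" "\<bar>w' t p - w p\<bar> \<le> \<delta> * sqrt K" by simp_all
        then show "\<bar>z' t p - z p\<bar> < \<epsilon> \<and> \<bar>w' t p - w p\<bar> < \<epsilon>" using \<delta>K by auto
      qed
    qed
  qed
  show "uniform_limit {a..b} z' z F" "uniform_limit {a..b} w' w F"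
    by (auto intro!: uniform_limitI elim: eventually_mono[OF close] simp: dist_real_def)
qed

primrec picard_iter :: "(real\<Rightarrow>real) \<Rightarrow> (real\<Rightarrow>real) \<Rightarrow> real \<Rightarrow> real \<Rightarrow> nat \<Rightarrow> (real\<Rightarrow>real)\<times>(real\<Rightarrow>real)" where
  "picard_iter \<alpha> \<beta> a w0 0 = (\<lambda>_. 0, \<lambda>_. 0)"
| "picard_iter \<alpha> \<beta> a w0 (Suc n) = (\<lambda>p. integral {a..p} (\<lambda>s. \<alpha> s * snd (picard_iter \<alpha> \<beta> a w0 n) s),
      \<lambda>p. w0 + integral {a..p} (\<lambda>s. \<beta> s * fst (picard_iter \<alpha> \<beta> a w0 n) s))"

lemma picard_iter_continuous:
  assumes "continuous_on {a..b} \<alpha>" "continuous_on {a..b} \<beta>"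
  shows "continuous_on {a..b} (fst (picard_iter \<alpha> \<beta> a w0 n)) \<and> continuous_on {a..b} (snd (picard_iter \<alpha> \<beta> a w0 n))"
proof (induction n)
  case 0 then show ?case by simp
next
  case (Suc n)
  then show ?case using assms
    by (auto intro!: continuous_intros indefinite_integral_continuous_1 integrable_continuous_real)
qed

lemma integral_difference_exp_bound:
  fixes \<kappa> Y Y' :: "real \<Rightarrow> real"
  assumes ck: "continuous_on {a..p} \<kappa>" and cY: "continuous_on {a..p} Y" "continuous_on {a..p} Y'"
    and M: "\<And>s. s \<in> {a..p} \<Longrightarrow> \<bar>\<kappa> s\<bar> \<le> M" and "0 < M" "a \<le> p" "0 \<le> K"
    and Y: "\<And>s. s \<in> {a..p} \<Longrightarrow> \<bar>Y s - Y' s\<bar> \<le> K * exp (2*M*(s-a))"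
  shows "\<bar>integral {a..p} (\<lambda>s. \<kappa> s * Y s) - integral {a..p} (\<lambda>s. \<kappa> s * Y' s)\<bar> \<le> K / 2 * exp (2*M*(p-a))"
proof -
  have "integral {a..p} (\<lambda>s. \<kappa> s * (Y s - Y' s)) = integral {a..p} (\<lambda>s. \<kappa> s * Y s - \<kappa> s * Y' s)"
    by (simp add: algebra_simps)
  also have "\<dots> = integral {a..p} (\<lambda>s. \<kappa> s * Y s) - integral {a..p} (\<lambda>s. \<kappa> s * Y' s)"
    using ck cY by (intro integral_diff integrable_continuous_real continuous_intros)
  finally have "integral {a..p} (\<lambda>s. \<kappa> s * Y s) - integral {a..p} (\<lambda>s. \<kappa> s * Y' s) =
      integral {a..p} (\<lambda>s. \<kappa> s * (Y s - Y' s))" ..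
  also have "\<bar>\<dots>\<bar> \<le> M * K * ((exp (2*M * (p - a)) - 1) / (2*M))"
  proof (rule abs_integral_le_has_integral)
    show "continuous_on {a..p} (\<lambda>s. \<kappa> s * (Y s - Y' s))" using ck cY by (intro continuous_intros)
    show "((\<lambda>s. M * K * exp (2*M * (s - a))) has_integral M * K * ((exp (2*M * (p - a)) - 1) / (2*M))) {a..p}"
      by (rule has_integral_mult_right[OF has_integral_exp_affine]) (use assms in auto)
    fix s assume s: "s \<in> {a..p}"
    have "\<bar>\<kappa> s * (Y s - Y' s)\<bar> = \<bar>\<kappa> s\<bar> * \<bar>Y s - Y' s\<bar>" by (simp add: abs_mult)
    also have "\<dots> \<le> M * (K * exp (2*M*(s-a)))" using M[OF s] Y[OF s] by (intro mult_mono) auto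
    finally show "\<bar>\<kappa> s * (Y s - Y' s)\<bar> \<le> M * K * exp (2*M * (s - a))" by (simp add: algebra_simps)
  qed
  also have "\<dots> = K / 2 * (exp (2*M*(p-a)) - 1)" using \<open>0 < M\<close> by (simp add: field_simps)
  also have "\<dots> \<le> K / 2 * exp (2*M*(p-a))" using \<open>0 \<le> K\<close> by (intro mult_left_mono) auto
  finally show ?thesis .
qed

lemma picard_iter_step_bound:
  assumes ca: "continuous_on {a..b} \<alpha>" and cb: "continuous_on {a..b} \<beta>"
    and M: "\<And>x. x \<in> {a..b} \<Longrightarrow> \<bar>\<alpha> x\<bar> \<le> M \<and> \<bar>\<beta> x\<bar> \<le> M" and "M > 0"
  shows "p \<in> {a..b} \<Longrightarrow>
    \<bar>fst (picard_iter \<alpha> \<beta> a w0 (Suc n)) p - fst (picard_iter \<alpha> \<beta> a w0 n) p\<bar> \<le> \<bar>w0\<bar> * (1/2)^n * exp (2*M*(p-a)) \<and>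
    \<bar>snd (picard_iter \<alpha> \<beta> a w0 (Suc n)) p - snd (picard_iter \<alpha> \<beta> a w0 n) p\<bar> \<le> \<bar>w0\<bar> * (1/2)^n * exp (2*M*(p-a))"
proof (induction n arbitrary: p)
  case 0
  then have "1 \<le> exp (2*M*(p-a))" using \<open>M>0\<close> by auto
  then have "\<bar>w0\<bar> * 1 \<le> \<bar>w0\<bar> * exp (2*M*(p-a))" by (intro mult_left_mono) auto
  then show ?case by simp
next
  case (Suc n)
  define P where "P = picard_iter \<alpha> \<beta> a w0"
  have sub: "{a..p} \<subseteq> {a..b}" using Suc.prems by auto
  have cP: "continuous_on {a..p} (fst (P k))" "continuous_on {a..p} (snd (P k))"
    "continuous_on {a..p} \<alpha>" "continuous_on {a..p} \<beta>" for k
    using picard_iter_continuous[OF ca cb] ca cb continuous_on_subset[OF _ sub] unfolding P_def by blast+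
  have IH: "\<bar>fst (P (Suc n)) s - fst (P n) s\<bar> \<le> \<bar>w0\<bar> * (1/2)^n * exp (2*M*(s-a))"
    "\<bar>snd (P (Suc n)) s - snd (P n) s\<bar> \<le> \<bar>w0\<bar> * (1/2)^n * exp (2*M*(s-a))" if "s \<in> {a..p}" for s
    using Suc.IH[of s] that sub unfolding P_def by auto
  have "\<bar>w0\<bar> * (1/2)^n / 2 = \<bar>w0\<bar> * (1/2)^Suc n" by simp
  then show ?case
    using integral_difference_exp_bound[OF cP(3) cP(2) cP(2) _ \<open>M>0\<close> _ _ IH(2)]
      integral_difference_exp_bound[OF cP(4) cP(1) cP(1) _ \<open>M>0\<close> _ _ IH(1)]
      M sub Suc.prems
    unfolding P_def by auto
qed

lemma picard_iter_converges:
  assumes ca: "continuous_on {a..b} \<alpha>" and cb: "continuous_on {a..b} \<beta>"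
  obtains Z W where "uniform_limit {a..b} (\<lambda>n. fst (picard_iter \<alpha> \<beta> a w0 n)) Z sequentially"
    "uniform_limit {a..b} (\<lambda>n. snd (picard_iter \<alpha> \<beta> a w0 n)) W sequentially"
proof -
  obtain M1 where M1: "M1 > 0" "\<And>x. x \<in> {a..b} \<Longrightarrow> \<bar>\<alpha> x\<bar> \<le> M1" using continuous_on_Icc_bound[OF ca] by blast
  obtain M2 where M2: "M2 > 0" "\<And>x. x \<in> {a..b} \<Longrightarrow> \<bar>\<beta> x\<bar> \<le> M2" using continuous_on_Icc_bound[OF cb] by blast
  define M where "M = max M1 M2"
  have M: "\<And>x. x \<in> {a..b} \<Longrightarrow> \<bar>\<alpha> x\<bar> \<le> M \<and> \<bar>\<beta> x\<bar> \<le> M" "M > 0"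
    using M1 M2 unfolding M_def by force+
  define P where "P = picard_iter \<alpha> \<beta> a w0"
  define Bn where "Bn i = \<bar>w0\<bar> * (1/2)^i * exp (2*M*(b-a))" for i
  have summ: "summable Bn" unfolding Bn_def
    by (intro summable_mult2 summable_mult summable_geometric) auto
  have bnd: "\<bar>fst (P (Suc i)) x - fst (P i) x\<bar> \<le> Bn i \<and> \<bar>snd (P (Suc i)) x - snd (P i) x\<bar> \<le> Bn i"
    if x: "x \<in> {a..b}" for i x
  proof -
    have "exp (2*M*(x-a)) \<le> exp (2*M*(b-a))" using x M by (auto intro!: mult_left_mono)
    then have "\<bar>w0\<bar> * (1/2)^i * exp (2*M*(x-a)) \<le> Bn i" unfolding Bn_def by (intro mult_left_mono) auto
    then show ?thesis using picard_iter_step_bound[OF ca cb M, of x w0 i] x unfolding P_def by linarith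
  qed
  have "(\<Sum>i<n. fst (P (Suc i)) x - fst (P i) x) = fst (P n) x"
       "(\<Sum>i<n. snd (P (Suc i)) x - snd (P i) x) = snd (P n) x" for n x
    using sum_lessThan_telescope[of "\<lambda>i. fst (P i) x" n] sum_lessThan_telescope[of "\<lambda>i. snd (P i) x" n]
    by (simp_all add: P_def)
  then have "(\<lambda>n x. \<Sum>i<n. fst (P (Suc i)) x - fst (P i) x) = (\<lambda>n. fst (P n))"
      "(\<lambda>n x. \<Sum>i<n. snd (P (Suc i)) x - snd (P i) x) = (\<lambda>n. snd (P n))"
    by auto
  then show ?thesis
    using that Weierstrass_m_test[of "{a..b}" "\<lambda>i x. fst (P (Suc i)) x - fst (P i) x" Bn]
      Weierstrass_m_test[of "{a..b}" "\<lambda>i x. snd (P (Suc i)) x - snd (P i) x" Bn] bnd summ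
    unfolding P_def by auto
qed

lemma picard_iter_nonneg:
  assumes ca: "continuous_on {a..b} \<alpha>" and cb: "continuous_on {a..b} \<beta>"
    and nn: "\<And>p. p \<in> {a..b} \<Longrightarrow> 0 \<le> \<alpha> p \<and> 0 \<le> \<beta> p" and "0 \<le> w0" and p: "p \<in> {a..b}"
  shows "0 \<le> fst (picard_iter \<alpha> \<beta> a w0 n) p \<and> 0 \<le> snd (picard_iter \<alpha> \<beta> a w0 n) p \<and>
    (0 < n \<longrightarrow> w0 \<le> snd (picard_iter \<alpha> \<beta> a w0 n) p)"
  using p
proof (induction n arbitrary: p)
  case (Suc n)
  define P where "P = picard_iter \<alpha> \<beta> a w0"
  have sub: "{a..p} \<subseteq> {a..b}" using Suc.prems by auto
  have cP: "continuous_on {a..p} (fst (P n))" "continuous_on {a..p} (snd (P n))"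
    "continuous_on {a..p} \<alpha>" "continuous_on {a..p} \<beta>"
    using picard_iter_continuous[OF ca cb] ca cb continuous_on_subset[OF _ sub] unfolding P_def by blast+
  have "0 \<le> integral {a..p} (\<lambda>s. \<alpha> s * snd (P n) s)" "0 \<le> integral {a..p} (\<lambda>s. \<beta> s * fst (P n) s)"
    using Suc.IH nn sub cP unfolding P_def
    by (auto intro!: Henstock_Kurzweil_Integration.integral_nonneg integrable_continuous_real
        continuous_intros mult_nonneg_nonneg)
  then show ?case using \<open>0 \<le> w0\<close> by (simp add: P_def)
qed simp

lemma lin_system_of_integral_eqs:
  assumes ca: "continuous_on {a..b} \<alpha>" and cb: "continuous_on {a..b} \<beta>"
    and cZ: "continuous_on {a..b} Z" and cW: "continuous_on {a..b} W"
    and eqZ: "\<And>p. p \<in> {a..b} \<Longrightarrow> Z p = z0 + integral {a..p} (\<lambda>s. \<alpha> s * W s)"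
    and eqW: "\<And>p. p \<in> {a..b} \<Longrightarrow> W p = w0 + integral {a..p} (\<lambda>s. \<beta> s * Z s)"
  shows "lin_system \<alpha> \<beta> Z W a b"
  unfolding lin_system_def
proof (intro ballI conjI)
  fix p assume p: "p \<in> {a..b}"
  have "((\<lambda>x. z0 + integral {a..x} (\<lambda>s. \<alpha> s * W s)) has_real_derivative \<alpha> p * W p) (at p within {a..b})"
    using integral_has_real_derivative[OF _ p, of "\<lambda>s. \<alpha> s * W s"] ca cW
    by (auto intro!: derivative_eq_intros continuous_intros)
  then show "(Z has_real_derivative \<alpha> p * W p) (at p within {a..b})"
    by (rule has_field_derivative_transform_within[OF _ zero_less_one p]) (simp add: eqZ)
  have "((\<lambda>x. w0 + integral {a..x} (\<lambda>s. \<beta> s * Z s)) has_real_derivative \<beta> p * Z p) (at p within {a..b})"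
    using integral_has_real_derivative[OF _ p, of "\<lambda>s. \<beta> s * Z s"] cb cZ
    by (auto intro!: derivative_eq_intros continuous_intros)
  then show "(W has_real_derivative \<beta> p * Z p) (at p within {a..b})"
    by (rule has_field_derivative_transform_within[OF _ zero_less_one p]) (simp add: eqW)
qed

lemma lin_system_exists:
  assumes ab: "a \<le> b" and ca: "continuous_on {a..b} \<alpha>" and cb: "continuous_on {a..b} \<beta>"
  shows "\<exists>Z W. lin_system \<alpha> \<beta> Z W a b \<and> Z a = 0 \<and> W a = w0 \<and>
     ((\<forall>p\<in>{a..b}. 0 \<le> \<alpha> p \<and> 0 \<le> \<beta> p) \<and> 0 \<le> w0 \<longrightarrow> (\<forall>p\<in>{a..b}. 0 \<le> Z p \<and> w0 \<le> W p))"
proof -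
  define P where "P = picard_iter \<alpha> \<beta> a w0"
  obtain Z W where uZ: "uniform_limit {a..b} (\<lambda>n. fst (P n)) Z sequentially"
    and uW: "uniform_limit {a..b} (\<lambda>n. snd (P n)) W sequentially"
    using picard_iter_converges[OF ca cb] unfolding P_def by blast
  have cP: "continuous_on {a..b} (fst (P k))" "continuous_on {a..b} (snd (P k))" for k
    unfolding P_def using picard_iter_continuous[OF ca cb] by blast+
  have cZ: "continuous_on {a..b} Z" by (rule uniform_limit_theorem[OF _ uZ]) (auto simp: cP)
  have cW: "continuous_on {a..b} W" by (rule uniform_limit_theorem[OF _ uW]) (auto simp: cP)
  have eqZ: "Z p = integral {a..p} (\<lambda>s. \<alpha> s * W s)" if p: "p \<in> {a..b}" for p
  proof -
    have "((\<lambda>n. fst (P (Suc n)) p) \<longlongrightarrow> Z p) sequentially"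
      using LIMSEQ_Suc[OF tendsto_uniform_limitI[OF uZ p]] .
    moreover have "((\<lambda>n. fst (P (Suc n)) p) \<longlongrightarrow> integral {a..p} (\<lambda>s. \<alpha> s * W s)) sequentially"
      using tendsto_integral_mult_uniform_limit[OF uW cP(2) ca p] by (simp add: P_def)
    ultimately show ?thesis by (rule LIMSEQ_unique)
  qed
  have eqW: "W p = w0 + integral {a..p} (\<lambda>s. \<beta> s * Z s)" if p: "p \<in> {a..b}" for p
  proof -
    have "((\<lambda>n. snd (P (Suc n)) p) \<longlongrightarrow> W p) sequentially"
      using LIMSEQ_Suc[OF tendsto_uniform_limitI[OF uW p]] .
    moreover have "((\<lambda>n. snd (P (Suc n)) p) \<longlongrightarrow> w0 + integral {a..p} (\<lambda>s. \<beta> s * Z s)) sequentially"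
      using tendsto_add[OF tendsto_const tendsto_integral_mult_uniform_limit[OF uZ cP(1) cb p]] by (simp add: P_def)
    ultimately show ?thesis by (rule LIMSEQ_unique)
  qed
  have "lin_system \<alpha> \<beta> Z W a b"
    by (rule lin_system_of_integral_eqs[OF ca cb cZ cW, of 0 w0]) (simp_all add: eqZ eqW)
  moreover have "Z a = 0" "W a = w0" using eqZ[of a] eqW[of a] ab by simp_all
  moreover have "0 \<le> Z p \<and> w0 \<le> W p"
    if "\<forall>p\<in>{a..b}. 0 \<le> \<alpha> p \<and> 0 \<le> \<beta> p" "0 \<le> w0" "p \<in> {a..b}" for p
  proof -
    note nn = picard_iter_nonneg[OF ca cb _ \<open>0 \<le> w0\<close> \<open>p \<in> {a..b}\<close>]
    have "0 \<le> Z p"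
      by (rule tendsto_lowerbound[OF tendsto_uniform_limitI[OF uZ \<open>p \<in> {a..b}\<close>]])
         (use nn that(1) in \<open>auto simp: P_def\<close>)
    moreover have "w0 \<le> W p"
    proof (rule tendsto_lowerbound[OF tendsto_uniform_limitI[OF uW \<open>p \<in> {a..b}\<close>]])
      show "\<forall>\<^sub>F n in sequentially. w0 \<le> snd (P n) p"
        using nn that(1) eventually_sequentially[of "\<lambda>n. w0 \<le> snd (P n) p"] unfolding P_def
        by (metis Suc_le_eq)
    qed auto
    ultimately show ?thesis ..
  qed
  ultimately show ?thesis by blast
qed

section \<open>The boundary function Xi\<close>

text \<open>The parameter c is an upper bound of 2 Gam on [p0, 0]; the theorem takes c = 2 sup Gam, so that
  c < lam is the admissibility condition of the paper.\<close>

locale xi_setting =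
  fixes \<gamma> :: "real \<Rightarrow> real" and p0 c :: real
  assumes p0: "p0 < 0" and cG: "continuous_on {p0..0} (Gam \<gamma>)"
    and Gc: "\<And>p. p \<in> {p0..0} \<Longrightarrow> 2 * Gam \<gamma> p \<le> c" and Gam0: "Gam \<gamma> 0 = 0"
begin

definition zcoef where "zcoef lam p = 1 / (aa \<gamma> lam p)^3"
definition wcoef where "wcoef lam mu p = mu * aa \<gamma> lam p"

lemma c_nonneg: "0 \<le> c" using Gc[of 0] p0 Gam0 by simp

lemma aa_pos: "lam > c \<Longrightarrow> p \<in> {p0..0} \<Longrightarrow> 0 < aa \<gamma> lam p"
  using Gc[of p] unfolding aa_def by simp

lemma aa_at_0: "aa \<gamma> lam 0 = sqrt lam" unfolding aa_def by (simp add: Gam0)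

lemma aa_continuous: "continuous_on {p0..0} (aa \<gamma> lam)"
  unfolding aa_def[abs_def] using cG by (intro continuous_intros)

lemma zcoef_continuous: assumes l: "lam > c" shows "continuous_on {p0..0} (zcoef lam)"
  unfolding zcoef_def[abs_def] using aa_continuous aa_pos[OF l] by (intro continuous_intros) force+

lemma wcoef_continuous: "continuous_on {p0..0} (wcoef lam mu)"
  unfolding wcoef_def[abs_def] using aa_continuous by (intro continuous_intros)

definition is_solution where "is_solution lam mu Z W \<longleftrightarrow>
   lin_system (zcoef lam) (wcoef lam mu) Z W p0 0 \<and> Z p0 = 0 \<and> W p0 = aa \<gamma> lam p0 ^ 3 \<and>
   (0 \<le> mu \<longrightarrow> (\<forall>p\<in>{p0..0}. 0 \<le> Z p \<and> aa \<gamma> lam p0 ^ 3 \<le> W p))"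

lemma is_solution_exists: "lam > c \<Longrightarrow> \<exists>Z W. is_solution lam mu Z W"
proof -
  assume l: "lam > c"
  obtain Z W where "lin_system (zcoef lam) (wcoef lam mu) Z W p0 0 \<and> Z p0 = 0 \<and> W p0 = aa \<gamma> lam p0 ^ 3 \<and>
     ((\<forall>p\<in>{p0..0}. 0 \<le> zcoef lam p \<and> 0 \<le> wcoef lam mu p) \<and> 0 \<le> aa \<gamma> lam p0 ^ 3 \<longrightarrow> (\<forall>p\<in>{p0..0}. 0 \<le> Z p \<and> aa \<gamma> lam p0 ^ 3 \<le> W p))"
    using lin_system_exists[OF _ zcoef_continuous[OF l] wcoef_continuous[of lam mu], where ?w0.0 = "aa \<gamma> lam p0 ^ 3"] p0 by force
  moreover have "0 \<le> mu \<Longrightarrow> (\<forall>p\<in>{p0..0}. 0 \<le> zcoef lam p \<and> 0 \<le> wcoef lam mu p) \<and> 0 \<le> aa \<gamma> lam p0 ^ 3"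
    using aa_pos[OF l] p0 by (auto simp: zcoef_def wcoef_def less_imp_le)
  ultimately show ?thesis unfolding is_solution_def by blast
qed

text \<open>w(p0) = a(p0)^3 is the normalisation z'(p0) = 1. For lam <= c the functions zs and ws below
  are unspecified.\<close>

definition zs where "zs lam mu = fst (SOME ZW. is_solution lam mu (fst ZW) (snd ZW))"
definition ws where "ws lam mu = snd (SOME ZW. is_solution lam mu (fst ZW) (snd ZW))"

lemma is_solution_zs_ws: "lam > c \<Longrightarrow> is_solution lam mu (zs lam mu) (ws lam mu)"
proof -
  assume "lam > c"
  then obtain Z W where "is_solution lam mu Z W" using is_solution_exists by blast
  then have "is_solution lam mu (fst (Z, W)) (snd (Z, W))" by simp
  then show ?thesis unfolding zs_def ws_def by (rule someI[where P = "\<lambda>ZW. is_solution lam mu (fst ZW) (snd ZW)"])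
qed

lemma zs_ws_props:
  assumes "lam > c"
  shows "lin_system (zcoef lam) (wcoef lam mu) (zs lam mu) (ws lam mu) p0 0" "zs lam mu p0 = 0"
    "ws lam mu p0 = aa \<gamma> lam p0 ^ 3"
    "0 \<le> mu \<Longrightarrow> p \<in> {p0..0} \<Longrightarrow> 0 \<le> zs lam mu p \<and> aa \<gamma> lam p0 ^ 3 \<le> ws lam mu p"
  using is_solution_zs_ws[OF assms, of mu] unfolding is_solution_def by auto

lemma zsol_unique_at_0:
  assumes l: "lam > c" and sol: "zsol \<gamma> p0 lam mu z z'"
  shows "z 0 = zs lam mu 0 \<and> z' 0 = zcoef lam 0 * ws lam mu 0"
proof -
  define w where "w q = aa \<gamma> lam q ^ 3 * z' q" for q
  have s: "lin_system (zcoef lam) (wcoef lam mu) z w p0 0"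
    unfolding lin_system_def
  proof
    fix p assume p: "p \<in> {p0..0}"
    have Ap: "0 < aa \<gamma> lam p" using aa_pos[OF l p] .
    have eq: "z' p = zcoef lam p * w p" unfolding zcoef_def w_def using Ap by simp
    have "(z has_real_derivative z' p) (at p within {p0..0})" using sol p unfolding zsol_def by auto
    then have dz: "(z has_real_derivative zcoef lam p * w p) (at p within {p0..0})" using eq by simp
    have dw: "(w has_real_derivative wcoef lam mu p * z p) (at p within {p0..0})"
      using sol p unfolding zsol_def w_def[abs_def] wcoef_def by auto
    show "(z has_real_derivative zcoef lam p * w p) (at p within {p0..0}) \<and>
          (w has_real_derivative wcoef lam mu p * z p) (at p within {p0..0})" using dz dw ..
  qed
  have i: "z p0 = zs lam mu p0" "w p0 = ws lam mu p0"
    using sol zs_ws_props[OF l] unfolding zsol_def w_def by auto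
  have "z 0 = zs lam mu 0 \<and> w 0 = ws lam mu 0"
    using lin_system_unique[OF _ zs_ws_props(1)[OF l] s zcoef_continuous[OF l] wcoef_continuous i] p0 by auto
  moreover have "z' 0 = zcoef lam 0 * w 0" unfolding zcoef_def w_def using aa_pos[OF l, of 0] p0 by simp
  ultimately show ?thesis by simp
qed

lemma zsol_zs_ws:
  assumes l: "lam > c"
  shows "zsol \<gamma> p0 lam mu (zs lam mu) (\<lambda>p. zcoef lam p * ws lam mu p)"
proof -
  have s: "lin_system (zcoef lam) (wcoef lam mu) (zs lam mu) (ws lam mu) p0 0" by (rule zs_ws_props(1)[OF l])
  have d2: "((\<lambda>q. aa \<gamma> lam q ^ 3 * (zcoef lam q * ws lam mu q)) has_real_derivative mu * aa \<gamma> lam p * zs lam mu p) (at p within {p0..0})"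
    if p: "p \<in> {p0..0}" for p
  proof (rule has_field_derivative_transform_within[OF _ zero_less_one p])
    show "(ws lam mu has_real_derivative mu * aa \<gamma> lam p * zs lam mu p) (at p within {p0..0})"
      using s p unfolding lin_system_def wcoef_def by auto
    fix x assume "x \<in> {p0..0}"
    then show "ws lam mu x = aa \<gamma> lam x ^ 3 * (zcoef lam x * ws lam mu x)"
      using aa_pos[OF l, of x] unfolding zcoef_def by simp
  qed
  show ?thesis unfolding zsol_def
    using s d2 zs_ws_props(2,3)[OF l] aa_pos[OF l, of p0] p0 unfolding lin_system_def by (auto simp: zcoef_def)
qed

lemma Xi_eq_ws_zs:
  assumes l: "lam > c"
  shows "Xi \<gamma> g \<sigma> p0 lam mu = ws lam mu 0 - (g + \<sigma> * mu) * zs lam mu 0"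
proof -
  have zv: "zval \<gamma> p0 lam mu 0 = zs lam mu 0"
    unfolding zval_def
  proof (rule the_equality)
    show "\<exists>z z'. zsol \<gamma> p0 lam mu z z' \<and> z 0 = zs lam mu 0" using zsol_zs_ws[OF l] by blast
  qed (use zsol_unique_at_0[OF l] in blast)
  have zd: "zder \<gamma> p0 lam mu 0 = zcoef lam 0 * ws lam mu 0"
    unfolding zder_def
  proof (rule the_equality)
    show "\<exists>z z'. zsol \<gamma> p0 lam mu z z' \<and> z' 0 = zcoef lam 0 * ws lam mu 0" using zsol_zs_ws[OF l] by blast
  qed (use zsol_unique_at_0[OF l] in blast)
  have lp: "lam > 0" using l c_nonneg by linarith
  have "lam powr (3/2) * zcoef lam 0 = 1"
    using lp by (simp add: powr_three_halves zcoef_def aa_at_0)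
  then show ?thesis unfolding Xi_def zv zd by (simp add: mult.assoc[symmetric])
qed

lemma Xi_wronskian:
  assumes l: "c < lam" and l': "c < lam'"
  shows "zs lam mu 0 * Xi \<gamma> g \<sigma> p0 lam' mu' - zs lam' mu' 0 * Xi \<gamma> g \<sigma> p0 lam mu =
    integral {p0..0} (\<lambda>p. (zcoef lam p - zcoef lam' p) * ws lam mu p * ws lam' mu' p
      + (wcoef lam' mu' p - wcoef lam mu p) * zs lam mu p * zs lam' mu' p)
    - \<sigma> * (mu' - mu) * zs lam mu 0 * zs lam' mu' 0"
proof -
  have "zs lam mu 0 * ws lam' mu' 0 - zs lam' mu' 0 * ws lam mu 0 =
    integral {p0..0} (\<lambda>p. (zcoef lam p - zcoef lam' p) * ws lam mu p * ws lam' mu' p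
      + (wcoef lam' mu' p - wcoef lam mu p) * zs lam mu p * zs lam' mu' p)"
    using lin_system_wronskian[OF _ zs_ws_props(1)[OF l] zs_ws_props(1)[OF l']]
      zs_ws_props(2)[OF l] zs_ws_props(2)[OF l'] p0 by simp
  then show ?thesis unfolding Xi_eq_ws_zs[OF l] Xi_eq_ws_zs[OF l'] by (simp add: algebra_simps)
qed

lemma uniform_limit_mu:
  assumes l: "lb > c"
  shows "uniform_limit {p0..0} (\<lambda>m. zs lb m) (zs lb mb) (at mb)"
        "uniform_limit {p0..0} (\<lambda>m. ws lb m) (ws lb mb) (at mb)"
proof -
  have "uniform_limit {p0..0} (\<lambda>m p. m * aa \<gamma> lb p) (\<lambda>p. mb * aa \<gamma> lb p) (at mb)"
    using aa_continuous
    by (intro uniform_lim_mult[OF uniform_limit_tendsto_const_on uniform_limit_const] tendsto_ident_at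
        bounded_continuous_image_Icc) (auto simp: image_constant_conv)
  then have uw: "uniform_limit {p0..0} (\<lambda>m. wcoef lb m) (wcoef lb mb) (at mb)"
    by (simp add: wcoef_def[abs_def])
  have s': "\<forall>\<^sub>F m in at mb. lin_system (zcoef lb) (wcoef lb m) (zs lb m) (ws lb m) p0 0"
    using zs_ws_props(1)[OF l] by simp
  have i: "((\<lambda>m. zs lb m p0) \<longlongrightarrow> zs lb mb p0) (at mb)" "((\<lambda>m. ws lb m p0) \<longlongrightarrow> ws lb mb p0) (at mb)"
    by (simp_all add: zs_ws_props(2,3)[OF l])
  show "uniform_limit {p0..0} (\<lambda>m. zs lb m) (zs lb mb) (at mb)"
       "uniform_limit {p0..0} (\<lambda>m. ws lb m) (ws lb mb) (at mb)"
    using lin_system_uniform_limit[OF _ zs_ws_props(1)[OF l] zcoef_continuous[OF l] wcoef_continuous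
        s' uniform_limit_const uw i] p0 by auto
qed

lemma Xi_has_derivative_mu:
  assumes l: "lb > c" and X0: "Xi \<gamma> g \<sigma> p0 lb mb = 0" and Z0: "zs lb mb 0 \<noteq> 0"
  shows "((\<lambda>m. Xi \<gamma> g \<sigma> p0 lb m) has_real_derivative
     (integral {p0..0} (\<lambda>p. aa \<gamma> lb p * zs lb mb p * zs lb mb p) - \<sigma> * zs lb mb 0 * zs lb mb 0) / zs lb mb 0) (at mb)"
proof -
  define z where "z = zs lb mb"
  define I where "I m = integral {p0..0} (\<lambda>p. aa \<gamma> lb p * z p * zs lb m p)" for m
  define Q where "Q m = (I m - \<sigma> * zs lb m 0 * z 0) / z 0" for m
  have cz: "continuous_on {p0..0} z" using lin_system_continuous(1)[OF zs_ws_props(1)[OF l]] by (simp add: z_def)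
  have eq: "Xi \<gamma> g \<sigma> p0 lb m - Xi \<gamma> g \<sigma> p0 lb mb = (m - mb) * Q m" for m
  proof -
    have "integral {p0..0} (\<lambda>p. (zcoef lb p - zcoef lb p) * ws lb mb p * ws lb m p
        + (wcoef lb m p - wcoef lb mb p) * z p * zs lb m p) = (m - mb) * I m"
      unfolding I_def by (subst integral_mult_right[symmetric], rule integral_cong) (simp add: wcoef_def algebra_simps)
    then have "z 0 * Xi \<gamma> g \<sigma> p0 lb m = (m - mb) * (I m - \<sigma> * zs lb m 0 * z 0)"
      using Xi_wronskian[OF l l, where mu = mb and mu' = m] X0 by (simp add: z_def algebra_simps)
    then show ?thesis using Z0 X0 unfolding Q_def z_def by (simp add: field_simps)
  qed
  have uZ: "uniform_limit {p0..0} (\<lambda>m. zs lb m) z (at mb)" unfolding z_def by (rule uniform_limit_mu[OF l])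
  have lim_I: "(I \<longlongrightarrow> integral {p0..0} (\<lambda>p. aa \<gamma> lb p * z p * z p)) (at mb)"
    unfolding I_def
  proof (rule tendsto_integral_uniform_limit)
    show "uniform_limit {p0..0} (\<lambda>m p. aa \<gamma> lb p * z p * zs lb m p) (\<lambda>p. aa \<gamma> lb p * z p * z p) (at mb)"
    proof (rule uniform_lim_mult[OF uniform_limit_const uZ])
      show "bounded ((\<lambda>p. aa \<gamma> lb p * z p) ` {p0..0})"
        using aa_continuous cz by (intro bounded_continuous_image_Icc continuous_intros)
      show "bounded (z ` {p0..0})" using bounded_continuous_image_Icc[OF cz] .
    qed
    show "\<forall>\<^sub>F m in at mb. continuous_on {p0..0} (\<lambda>p. aa \<gamma> lb p * z p * zs lb m p)"
      using aa_continuous cz lin_system_continuous(1)[OF zs_ws_props(1)[OF l]] by (intro always_eventually allI continuous_intros)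
    show "continuous_on {p0..0} (\<lambda>p. aa \<gamma> lb p * z p * z p)"
      using aa_continuous cz by (intro continuous_intros)
  qed (use p0 in auto)
  have lim_Z: "((\<lambda>m. zs lb m 0) \<longlongrightarrow> z 0) (at mb)"
    using tendsto_uniform_limitI[OF uZ, of 0] p0 by auto
  have "(Q \<longlongrightarrow> (integral {p0..0} (\<lambda>p. aa \<gamma> lb p * z p * z p) - \<sigma> * z 0 * z 0) / z 0) (at mb)"
    unfolding Q_def[abs_def] by (intro tendsto_intros lim_I lim_Z) (use Z0 z_def in auto)
  then show ?thesis
    by (intro has_real_derivative_from_quotient[where Q = Q]) (auto simp: eq z_def)
qed

lemma radicand_range:
  assumes l: "lb > c"
  obtains s1 s2 where "0 < s1" "\<And>p. p \<in> {p0..0} \<Longrightarrow> lb - 2 * Gam \<gamma> p \<in> {s1..s2}"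
proof -
  obtain G where G: "\<And>p. p \<in> {p0..0} \<Longrightarrow> \<bar>Gam \<gamma> p\<bar> \<le> G" using continuous_on_Icc_bound[OF cG] by blast
  show ?thesis
  proof (rule that[of "lb - c" "lb + 2 * G"])
    show "0 < lb - c" using l by simp
    fix p assume p: "p \<in> {p0..0}"
    show "lb - 2 * Gam \<gamma> p \<in> {lb - c..lb + 2 * G}" using Gc[OF p] G[OF p] by auto
  qed
qed

lemma uniform_limit_aa_quotient:
  assumes l: "lb > c"
  shows "uniform_limit {p0..0} (\<lambda>t p. (aa \<gamma> t p - aa \<gamma> lb p) / (t - lb)) (\<lambda>p. inverse (aa \<gamma> lb p) / 2) (at lb)"
proof -
  define R where "R p = lb - 2 * Gam \<gamma> p" for p
  obtain s1 s2 where s1: "0 < s1" and R: "\<And>p. p \<in> {p0..0} \<Longrightarrow> R p \<in> {s1..s2}"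
    using radicand_range[OF l] unfolding R_def by blast
  have "uniform_limit {p0..0} (\<lambda>t p. (sqrt (R p + (t - lb)) - sqrt (R p)) / (t - lb))
      (\<lambda>p. inverse (sqrt (R p)) / 2) (at lb)"
  proof (rule uniform_limit_shifted_quotient[of "s1 / 2"])
    show "(sqrt has_real_derivative inverse (sqrt t) / 2) (at t)" if "t \<in> {s1 - s1 / 2..s2 + s1 / 2}" for t
      using that s1 by (intro DERIV_real_sqrt) auto
    show "continuous_on {s1 - s1 / 2..s2 + s1 / 2} (\<lambda>t. inverse (sqrt t) / 2)"
      using s1 by (intro continuous_intros) auto
  qed (use s1 R in auto)
  moreover have "aa \<gamma> t p = sqrt (R p + (t - lb))" for t p
    unfolding aa_def R_def by (simp add: algebra_simps)
  ultimately show ?thesis by simp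
qed

lemma uniform_limit_zcoef_quotient:
  assumes l: "lb > c"
  shows "uniform_limit {p0..0} (\<lambda>t p. (zcoef t p - zcoef lb p) / (t - lb)) (\<lambda>p. - 3 / (2 * aa \<gamma> lb p ^ 5)) (at lb)"
proof -
  define R where "R p = lb - 2 * Gam \<gamma> p" for p
  obtain s1 s2 where s1: "0 < s1" and R: "\<And>p. p \<in> {p0..0} \<Longrightarrow> R p \<in> {s1..s2}"
    using radicand_range[OF l] unfolding R_def by blast
  have "uniform_limit {p0..0} (\<lambda>t p. (1 / sqrt (R p + (t - lb)) ^ 3 - 1 / sqrt (R p) ^ 3) / (t - lb))
      (\<lambda>p. - 3 / (2 * sqrt (R p) ^ 5)) (at lb)"
  proof (rule uniform_limit_shifted_quotient[of "s1 / 2"])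
    show "((\<lambda>t. 1 / sqrt t ^ 3) has_real_derivative - 3 / (2 * sqrt t ^ 5)) (at t)"
      if "t \<in> {s1 - s1 / 2..s2 + s1 / 2}" for t
      using that s1 by (intro has_derivative_inverse_sqrt_cube) auto
    show "continuous_on {s1 - s1 / 2..s2 + s1 / 2} (\<lambda>t. - 3 / (2 * sqrt t ^ 5))"
      using s1 by (intro continuous_intros) auto
  qed (use s1 R in auto)
  moreover have "zcoef t p = 1 / sqrt (R p + (t - lb)) ^ 3" "aa \<gamma> t p = sqrt (R p + (t - lb))" for t p
    unfolding zcoef_def aa_def R_def by (simp_all add: algebra_simps)
  ultimately show ?thesis by simp
qed

lemma eventually_gt_c: "lb > c \<Longrightarrow> \<forall>\<^sub>F t in at lb. t > c"
  unfolding eventually_at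
  by (intro exI[of _ "lb - c"]) (auto simp: dist_real_def)

lemma inverse_aa_continuous: "lb > c \<Longrightarrow> continuous_on {p0..0} (\<lambda>p. inverse (aa \<gamma> lb p) / 2)"
  using aa_continuous aa_pos by (intro continuous_intros) force+

lemma uniform_limit_lam:
  assumes l: "lb > c"
  shows "uniform_limit {p0..0} (\<lambda>t. zs t mb) (zs lb mb) (at lb)"
        "uniform_limit {p0..0} (\<lambda>t. ws t mb) (ws lb mb) (at lb)"
proof -
  have ua: "uniform_limit {p0..0} (aa \<gamma>) (aa \<gamma> lb) (at lb)"
    by (rule uniform_limit_from_quotient[OF uniform_limit_aa_quotient[OF l]
        bounded_continuous_image_Icc[OF inverse_aa_continuous[OF l]]])
  have uz: "uniform_limit {p0..0} zcoef (zcoef lb) (at lb)"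
    by (rule uniform_limit_from_quotient[OF uniform_limit_zcoef_quotient[OF l]])
       (use aa_continuous aa_pos[OF l] in \<open>force intro!: bounded_continuous_image_Icc continuous_intros\<close>)
  have uw: "uniform_limit {p0..0} (\<lambda>t. wcoef t mb) (wcoef lb mb) (at lb)"
    unfolding wcoef_def[abs_def] using aa_continuous
    by (intro uniform_lim_mult[OF uniform_limit_const ua] bounded_continuous_image_Icc continuous_intros)
       (auto simp: image_constant_conv)
  have s': "\<forall>\<^sub>F t in at lb. lin_system (zcoef t) (wcoef t mb) (zs t mb) (ws t mb) p0 0"
    using eventually_gt_c[OF l] by eventually_elim (rule zs_ws_props(1))
  have i1: "((\<lambda>t. zs t mb p0) \<longlongrightarrow> zs lb mb p0) (at lb)"
    by (rule Lim_transform_eventually[OF tendsto_const])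
       (use eventually_gt_c[OF l] in \<open>eventually_elim, simp add: zs_ws_props(2) l\<close>)
  have i2: "((\<lambda>t. ws t mb p0) \<longlongrightarrow> ws lb mb p0) (at lb)"
    unfolding zs_ws_props(3)[OF l]
  proof (rule Lim_transform_eventually)
    show "((\<lambda>t. aa \<gamma> t p0 ^ 3) \<longlongrightarrow> aa \<gamma> lb p0 ^ 3) (at lb)" unfolding aa_def by (intro tendsto_intros)
    show "\<forall>\<^sub>F t in at lb. aa \<gamma> t p0 ^ 3 = ws t mb p0"
      using eventually_gt_c[OF l] by eventually_elim (simp add: zs_ws_props(3))
  qed
  show "uniform_limit {p0..0} (\<lambda>t. zs t mb) (zs lb mb) (at lb)"
       "uniform_limit {p0..0} (\<lambda>t. ws t mb) (ws lb mb) (at lb)"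
    using lin_system_uniform_limit[OF _ zs_ws_props(1)[OF l] zcoef_continuous[OF l] wcoef_continuous
        s' uz uw i1 i2] p0 by auto
qed

lemma Xi_lam_difference:
  assumes l: "c < lb" and t: "c < t" "t \<noteq> lb" and X0: "Xi \<gamma> g \<sigma> p0 lb mb = 0"
  shows "zs lb mb 0 * Xi \<gamma> g \<sigma> p0 t mb = (t - lb) * integral {p0..0} (\<lambda>p.
      (zcoef lb p - zcoef t p) / (t - lb) * ws lb mb p * ws t mb p
      + mb * ((aa \<gamma> t p - aa \<gamma> lb p) / (t - lb)) * zs lb mb p * zs t mb p)"
proof -
  have "zs lb mb 0 * Xi \<gamma> g \<sigma> p0 t mb = integral {p0..0} (\<lambda>p. (zcoef lb p - zcoef t p) * ws lb mb p * ws t mb p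
      + (wcoef t mb p - wcoef lb mb p) * zs lb mb p * zs t mb p)"
    using Xi_wronskian[OF l t(1), where g = g and \<sigma> = \<sigma> and mu = mb and mu' = mb] X0 by simp
  also have "\<dots> = integral {p0..0} (\<lambda>p. (t - lb) * ((zcoef lb p - zcoef t p) / (t - lb) * ws lb mb p * ws t mb p
      + mb * ((aa \<gamma> t p - aa \<gamma> lb p) / (t - lb)) * zs lb mb p * zs t mb p))"
  proof (rule integral_cong)
    fix p
    define q1 where "q1 = (zcoef lb p - zcoef t p) / (t - lb)"
    define q2 where "q2 = (aa \<gamma> t p - aa \<gamma> lb p) / (t - lb)"
    have h1: "(t - lb) * q1 = zcoef lb p - zcoef t p" and h2: "(t - lb) * q2 = aa \<gamma> t p - aa \<gamma> lb p"
      using t(2) by (simp_all add: q1_def q2_def)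
    have "(t - lb) * (q1 * ws lb mb p * ws t mb p + mb * q2 * zs lb mb p * zs t mb p) =
        ((t - lb) * q1) * ws lb mb p * ws t mb p + mb * ((t - lb) * q2) * zs lb mb p * zs t mb p"
      by (simp add: algebra_simps)
    also have "\<dots> = (zcoef lb p - zcoef t p) * ws lb mb p * ws t mb p
        + (wcoef t mb p - wcoef lb mb p) * zs lb mb p * zs t mb p"
      unfolding h1 h2 by (simp add: wcoef_def algebra_simps)
    finally show "(zcoef lb p - zcoef t p) * ws lb mb p * ws t mb p + (wcoef t mb p - wcoef lb mb p) * zs lb mb p * zs t mb p
        = (t - lb) * ((zcoef lb p - zcoef t p) / (t - lb) * ws lb mb p * ws t mb p
          + mb * ((aa \<gamma> t p - aa \<gamma> lb p) / (t - lb)) * zs lb mb p * zs t mb p)"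
      unfolding q1_def q2_def by simp
  qed
  finally show ?thesis by simp
qed

lemma tendsto_lam_quotient_integral:
  assumes l: "c < lb"
  shows "((\<lambda>t. integral {p0..0} (\<lambda>p. (zcoef lb p - zcoef t p) / (t - lb) * ws lb mb p * ws t mb p
      + mb * ((aa \<gamma> t p - aa \<gamma> lb p) / (t - lb)) * zs lb mb p * zs t mb p))
    \<longlongrightarrow> integral {p0..0} (\<lambda>p. 3 / (2 * aa \<gamma> lb p ^ 5) * ws lb mb p * ws lb mb p
      + mb * (inverse (aa \<gamma> lb p) / 2) * zs lb mb p * zs lb mb p)) (at lb)"
proof -
  define z where "z = zs lb mb"
  define w where "w = ws lb mb"
  define D1 where "D1 t p = (aa \<gamma> t p - aa \<gamma> lb p) / (t - lb)" for t p
  define D2 where "D2 t p = (zcoef lb p - zcoef t p) / (t - lb)" for t p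
  define L1 where "L1 p = inverse (aa \<gamma> lb p) / 2" for p
  define L2 where "L2 p = 3 / (2 * aa \<gamma> lb p ^ 5)" for p
  have cz: "continuous_on {p0..0} z" "continuous_on {p0..0} w"
    using lin_system_continuous[OF zs_ws_props(1)[OF l]] by (auto simp: z_def w_def)
  have uZ: "uniform_limit {p0..0} (\<lambda>t. zs t mb) z (at lb)" unfolding z_def by (rule uniform_limit_lam[OF l])
  have uW: "uniform_limit {p0..0} (\<lambda>t. ws t mb) w (at lb)" unfolding w_def by (rule uniform_limit_lam[OF l])
  have u1: "uniform_limit {p0..0} D1 L1 (at lb)"
    unfolding D1_def[abs_def] L1_def[abs_def] by (rule uniform_limit_aa_quotient[OF l])
  have u2: "uniform_limit {p0..0} D2 L2 (at lb)"
    using uniform_limit_uminus[OF uniform_limit_zcoef_quotient[OF l]]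
    unfolding D2_def[abs_def] L2_def[abs_def] by (simp add: diff_divide_distrib)
  have cL: "continuous_on {p0..0} L1" "continuous_on {p0..0} L2"
    unfolding L1_def[abs_def] L2_def[abs_def] using aa_continuous aa_pos[OF l]
    by (intro continuous_intros; force)+
  have u: "uniform_limit {p0..0} (\<lambda>t p. D2 t p * w p * ws t mb p + mb * D1 t p * z p * zs t mb p)
      (\<lambda>p. L2 p * w p * w p + mb * L1 p * z p * z p) (at lb)"
    using cL cz
    by (intro uniform_limit_add uniform_lim_mult[OF _ uW] uniform_lim_mult[OF _ uZ]
        uniform_lim_mult[OF u2 uniform_limit_const] uniform_lim_mult[OF _ uniform_limit_const]
        uniform_lim_mult[OF uniform_limit_const u1] bounded_continuous_image_Icc continuous_intros)
       (auto simp: image_constant_conv)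
  have ev: "\<forall>\<^sub>F t in at lb. continuous_on {p0..0} (\<lambda>p. D2 t p * w p * ws t mb p + mb * D1 t p * z p * zs t mb p)"
    using eventually_gt_c[OF l] eventually_neq_at[of lb]
  proof eventually_elim
    case (elim t)
    show ?case unfolding D1_def D2_def
      using zcoef_continuous[OF l] zcoef_continuous[OF elim(1)] aa_continuous cz
        lin_system_continuous[OF zs_ws_props(1)[OF elim(1)]] elim(2)
      by (intro continuous_intros) auto
  qed
  have cg: "continuous_on {p0..0} (\<lambda>p. L2 p * w p * w p + mb * L1 p * z p * z p)"
    using cL cz by (intro continuous_intros)
  have "((\<lambda>t. integral {p0..0} (\<lambda>p. D2 t p * w p * ws t mb p + mb * D1 t p * z p * zs t mb p))
      \<longlongrightarrow> integral {p0..0} (\<lambda>p. L2 p * w p * w p + mb * L1 p * z p * z p)) (at lb)"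
    by (rule tendsto_integral_uniform_limit[OF u _ ev cg]) (use p0 in simp)
  then show ?thesis by (simp add: D1_def D2_def L1_def L2_def z_def w_def)
qed

lemma Xi_has_derivative_lam:
  assumes l: "lb > c" and X0: "Xi \<gamma> g \<sigma> p0 lb mb = 0" and Z0: "zs lb mb 0 \<noteq> 0"
  shows "((\<lambda>t. Xi \<gamma> g \<sigma> p0 t mb) has_real_derivative
     integral {p0..0} (\<lambda>p. 3 / (2 * aa \<gamma> lb p ^ 5) * ws lb mb p * ws lb mb p +
        mb * (inverse (aa \<gamma> lb p) / 2) * zs lb mb p * zs lb mb p) / zs lb mb 0) (at lb)"
proof (rule has_real_derivative_from_quotient)
  define I where "I t = integral {p0..0} (\<lambda>p. (zcoef lb p - zcoef t p) / (t - lb) * ws lb mb p * ws t mb p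
      + mb * ((aa \<gamma> t p - aa \<gamma> lb p) / (t - lb)) * zs lb mb p * zs t mb p)" for t
  show "\<forall>\<^sub>F t in at lb. Xi \<gamma> g \<sigma> p0 t mb - Xi \<gamma> g \<sigma> p0 lb mb = (t - lb) * (I t / zs lb mb 0)"
    using eventually_gt_c[OF l] eventually_neq_at[of lb]
  proof eventually_elim
    case (elim t)
    have "zs lb mb 0 * Xi \<gamma> g \<sigma> p0 t mb = (t - lb) * I t"
      using Xi_lam_difference[OF l elim X0] unfolding I_def .
    then show ?case using X0 Z0 by (simp add: field_simps)
  qed
  show "((\<lambda>t. I t / zs lb mb 0) \<longlongrightarrow> integral {p0..0} (\<lambda>p. 3 / (2 * aa \<gamma> lb p ^ 5) * ws lb mb p * ws lb mb p +
        mb * (inverse (aa \<gamma> lb p) / 2) * zs lb mb p * zs lb mb p) / zs lb mb 0) (at lb)"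
    unfolding I_def by (intro tendsto_divide tendsto_lam_quotient_integral[OF l] tendsto_const Z0)
qed

lemma zs_at_0_pos:
  assumes l: "lb > c" and mb: "0 \<le> mb"
  shows "0 < zs lb mb 0"
proof -
  have s0: "lin_system (zcoef lb) (wcoef lb mb) (zs lb mb) (ws lb mb) p0 0" by (rule zs_ws_props(1)[OF l])
  have "zs lb mb 0 = integral {p0..0} (\<lambda>p. zcoef lb p * ws lb mb p)"
    using lin_system_integral_eq(1)[OF _ s0] zs_ws_props(2)[OF l] p0 by simp
  also have "0 < \<dots>"
  proof (rule integral_pos_continuous[of _ _ _ p0])
    show "continuous_on {p0..0} (\<lambda>p. zcoef lb p * ws lb mb p)"
      using zcoef_continuous[OF l] lin_system_continuous(2)[OF s0] by (intro continuous_intros)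
    fix x assume x: "x \<in> {p0..0}"
    have "0 < aa \<gamma> lb p0 ^ 3" using aa_pos[OF l, of p0] p0 by simp
    then have "0 < ws lb mb x" using zs_ws_props(4)[OF l mb x] by linarith
    then show "0 \<le> zcoef lb x * ws lb mb x" using aa_pos[OF l x] by (simp add: zcoef_def)
  next
    have "0 < aa \<gamma> lb p0 ^ 3" using aa_pos[OF l, of p0] p0 by simp
    then show "0 < zcoef lb p0 * ws lb mb p0" using aa_pos[OF l, of p0] p0 zs_ws_props(3)[OF l] by (simp add: zcoef_def)
  qed (use p0 in auto)
  finally show ?thesis .
qed

lemma Xi_deriv_lam_pos:
  assumes l: "lb > c" and mb: "0 \<le> mb" and X0: "Xi \<gamma> g \<sigma> p0 lb mb = 0"
  shows "\<exists>d>0. ((\<lambda>t. Xi \<gamma> g \<sigma> p0 t mb) has_real_derivative d) (at lb)"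
proof -
  define z where "z = zs lb mb"
  define w where "w = ws lb mb"
  have s0: "lin_system (zcoef lb) (wcoef lb mb) z w p0 0" unfolding z_def w_def by (rule zs_ws_props(1)[OF l])
  have cz: "continuous_on {p0..0} z" "continuous_on {p0..0} w" using lin_system_continuous[OF s0] by auto
  have z0: "0 < z 0" unfolding z_def by (rule zs_at_0_pos[OF l mb])
  have Ap: "0 < aa \<gamma> lb p" if "p \<in> {p0..0}" for p using aa_pos[OF l that] .
  define J where "J = integral {p0..0} (\<lambda>p. 3 / (2 * aa \<gamma> lb p ^ 5) * w p * w p + mb * (inverse (aa \<gamma> lb p) / 2) * z p * z p)"
  have "((\<lambda>t. Xi \<gamma> g \<sigma> p0 t mb) has_real_derivative J / z 0) (at lb)"
    using Xi_has_derivative_lam[OF l X0] z0 unfolding J_def z_def w_def by simp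
  moreover have "0 < J"
    unfolding J_def
  proof (rule integral_pos_continuous[of _ _ _ p0])
    show "continuous_on {p0..0} (\<lambda>p. 3 / (2 * aa \<gamma> lb p ^ 5) * w p * w p + mb * (inverse (aa \<gamma> lb p) / 2) * z p * z p)"
      using aa_continuous Ap cz by (intro continuous_intros) force+
    fix x assume x: "x \<in> {p0..0}"
    show "0 \<le> 3 / (2 * aa \<gamma> lb x ^ 5) * w x * w x + mb * (inverse (aa \<gamma> lb x) / 2) * z x * z x"
      using Ap[OF x] mb by (intro add_nonneg_nonneg) (simp_all add: mult.assoc)
  next
    have "0 < 3 / (2 * aa \<gamma> lb p0 ^ 5) * w p0 * w p0"
      using Ap[of p0] p0 zs_ws_props(3)[OF l] by (simp add: w_def)
    then show "0 < 3 / (2 * aa \<gamma> lb p0 ^ 5) * w p0 * w p0 + mb * (inverse (aa \<gamma> lb p0) / 2) * z p0 * z p0"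
      using zs_ws_props(2)[OF l] by (simp add: z_def)
  qed (use p0 in auto)
  ultimately show ?thesis using z0 by (intro exI[of _ "J / z 0"]) auto
qed

lemma ws_p0_lt_ws_0:
  assumes l: "lb > c" and mb: "0 < mb"
  shows "ws lb mb p0 < ws lb mb 0"
proof -
  have s0: "lin_system (zcoef lb) (wcoef lb mb) (zs lb mb) (ws lb mb) p0 0" by (rule zs_ws_props(1)[OF l])
  have "0 < integral {p0..0} (\<lambda>p. wcoef lb mb p * zs lb mb p)"
  proof (rule integral_pos_continuous[of _ _ _ 0])
    show "continuous_on {p0..0} (\<lambda>p. wcoef lb mb p * zs lb mb p)"
      using wcoef_continuous lin_system_continuous(1)[OF s0] by (intro continuous_intros)
    fix x assume x: "x \<in> {p0..0}"
    show "0 \<le> wcoef lb mb x * zs lb mb x"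
      using aa_pos[OF l x] zs_ws_props(4)[OF l _ x] mb by (simp add: wcoef_def)
  qed (use aa_pos[OF l, of 0] p0 zs_at_0_pos[OF l] mb in \<open>auto simp: wcoef_def\<close>)
  also have "\<dots> = ws lb mb 0 - ws lb mb p0"
    using lin_system_integral_eq(2)[OF _ s0] p0 by simp
  finally show ?thesis by simp
qed

lemma Xi_deriv_mu_neg:
  assumes l: "lb > c" and mb: "0 < mb" and g: "0 < g"
    and I1: "integral {p0..0} (zcoef lb) \<le> 1 / g" and X0: "Xi \<gamma> g \<sigma> p0 lb mb = 0"
  shows "\<exists>d<0. ((\<lambda>m. Xi \<gamma> g \<sigma> p0 lb m) has_real_derivative d) (at mb)"
proof -
  define z where "z = zs lb mb"
  define w where "w = ws lb mb"
  have s0: "lin_system (zcoef lb) (wcoef lb mb) z w p0 0" unfolding z_def w_def by (rule zs_ws_props(1)[OF l])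
  have cz: "continuous_on {p0..0} z" "continuous_on {p0..0} w" using lin_system_continuous[OF s0] by auto
  have zp0: "z p0 = 0" unfolding z_def by (rule zs_ws_props(2)[OF l])
  have z0: "0 < z 0" unfolding z_def by (rule zs_at_0_pos) (use l mb in auto)
  have Ap: "0 < aa \<gamma> lb p" if "p \<in> {p0..0}" for p using aa_pos[OF l that] .
  have cal: "continuous_on {p0..0} (zcoef lb)" by (rule zcoef_continuous[OF l])
  have X0': "w 0 - (g + \<sigma> * mb) * z 0 = 0" using X0 unfolding Xi_eq_ws_zs[OF l] z_def w_def .
  define N where "N = integral {p0..0} (\<lambda>p. aa \<gamma> lb p * z p * z p)"
  define E where "E = integral {p0..0} (\<lambda>p. zcoef lb p * (w p)\<^sup>2)"
  have "z 0 * w 0 = integral {p0..0} (\<lambda>p. zcoef lb p * w p ^ 2 + mb * (aa \<gamma> lb p * z p * z p))"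
    using lin_system_energy[OF _ s0 zp0] p0 by (simp add: wcoef_def power2_eq_square algebra_simps)
  also have "\<dots> = E + mb * N"
    unfolding E_def N_def using cal cz aa_continuous
    by (subst integral_add) (auto intro!: integrable_continuous_real continuous_intros)
  finally have energy: "z 0 * w 0 = E + mb * N" .
  have wne: "w 0 \<noteq> w p0" using ws_p0_lt_ws_0[OF l mb] unfolding w_def by simp
  have "z 0 = integral {p0..0} (\<lambda>p. zcoef lb p * w p)"
    using lin_system_integral_eq(1)[OF _ s0] p0 zp0 by simp
  also have "(\<dots>)\<^sup>2 < integral {p0..0} (zcoef lb) * E"
    unfolding E_def
    by (rule integral_weighted_square_gt[of p0 0 "zcoef lb" w 0 p0]) (use p0 cal cz Ap wne in \<open>auto simp: zcoef_def\<close>)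
  also have "\<dots> \<le> E / g"
  proof -
    have "0 \<le> E"
      unfolding E_def
    proof (rule Henstock_Kurzweil_Integration.integral_nonneg)
      show "(\<lambda>p. zcoef lb p * (w p)\<^sup>2) integrable_on {p0..0}"
        using cal cz by (intro integrable_continuous_real continuous_intros)
      show "0 \<le> zcoef lb p * (w p)\<^sup>2" if "p \<in> {p0..0}" for p using Ap[OF that] by (simp add: zcoef_def)
    qed
    then show ?thesis using mult_right_mono[OF I1] by simp
  qed
  finally have "g * (z 0)\<^sup>2 < E" using g by (simp add: field_simps)
  then have "mb * N < mb * (\<sigma> * z 0 * z 0)"
    using energy X0' by (simp add: power2_eq_square algebra_simps)
  then have "N - \<sigma> * z 0 * z 0 < 0" using mb by simp
  moreover have "((\<lambda>m. Xi \<gamma> g \<sigma> p0 lb m) has_real_derivative (N - \<sigma> * z 0 * z 0) / z 0) (at mb)"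
    using Xi_has_derivative_mu[OF l X0] z0 unfolding N_def z_def by simp
  ultimately show ?thesis using z0 by (intro exI[of _ "(N - \<sigma> * z 0 * z 0) / z 0"]) (auto simp: divide_neg_pos)
qed

lemma integral_zcoef_antimono:
  assumes "c < lam" "lam \<le> lam'"
  shows "integral {p0..0} (zcoef lam') \<le> integral {p0..0} (zcoef lam)"
proof (rule integral_le)
  show "zcoef lam' integrable_on {p0..0}" "zcoef lam integrable_on {p0..0}"
    using assms by (auto intro!: integrable_continuous_real zcoef_continuous)
  fix p assume p: "p \<in> {p0..0}"
  have a0: "0 < aa \<gamma> lam p" by (rule aa_pos[OF assms(1) p])
  have "aa \<gamma> lam p \<le> aa \<gamma> lam' p" unfolding aa_def using assms(2) by simp
  then have "aa \<gamma> lam p ^ 3 \<le> aa \<gamma> lam' p ^ 3" "0 < aa \<gamma> lam' p"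
    using a0 by (auto intro: power_mono)
  then show "zcoef lam' p \<le> zcoef lam p"
    unfolding zcoef_def using a0 by (intro divide_left_mono) auto
qed

end

lemma Gam_continuous_on_piecewise:
  fixes \<gamma> \<gamma>1 \<gamma>2 :: "real \<Rightarrow> real"
  assumes "p0 < p1" "p1 < 0"
    and c1: "continuous_on {p0..p1} \<gamma>1" and c2: "continuous_on {p1..0} \<gamma>2"
    and e1: "\<forall>p\<in>{p0..<p1}. \<gamma> p = \<gamma>1 p" and e2: "\<forall>p\<in>{p1<..0}. \<gamma> p = \<gamma>2 p"
  shows "continuous_on {p0..0} (Gam \<gamma>)"
proof -
  have i1: "\<gamma> integrable_on {p0..p1}"
    by (rule integrable_spike_finite[where S = "{p1}" and f = \<gamma>1]) (use e1 integrable_continuous_real[OF c1] in auto)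
  have i2: "\<gamma> integrable_on {p1..0}"
    by (rule integrable_spike_finite[where S = "{p1}" and f = \<gamma>2]) (use e2 integrable_continuous_real[OF c2] in auto)
  have "\<gamma> integrable_on {p0..0}" using Henstock_Kurzweil_Integration.integrable_combine[OF _ _ i1 i2] assms by auto
  then show ?thesis
    unfolding Gam_def[abs_def] using indefinite_integral_continuous_1' by (intro continuous_intros) blast
qed

theorem lemma4p4:
  fixes g \<sigma> p0 p1 \<alpha> lam0 lb mb :: real and \<gamma> \<gamma>1 \<gamma>2 :: "real \<Rightarrow> real"
  assumes "g > 0" and "\<sigma> > 0" and "p0 < p1" and "p1 < 0"
    and "0 < \<alpha>" and "\<alpha> < 1"
    and "holder_on \<alpha> {p0..p1} \<gamma>1" and "holder_on \<alpha> {p1..0} \<gamma>2"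
    and "\<forall>p\<in>{p0..<p1}. \<gamma> p = \<gamma>1 p" and "\<forall>p\<in>{p1<..0}. \<gamma> p = \<gamma>2 p"
    and "lam0 > 2 * (SUP p\<in>{p0..0}. Gam \<gamma> p)"
    and "1 / g = integral {p0..0} (\<lambda>p. 1 / (aa \<gamma> lam0 p) ^ 3)"
    and "lam0 \<le> lb" and "0 < mb"
    and "Xi \<gamma> g \<sigma> p0 lb mb = 0"
  shows "(\<exists>d>0. ((\<lambda>l. Xi \<gamma> g \<sigma> p0 l mb) has_real_derivative d) (at lb)) \<and>
         (\<exists>d<0. ((\<lambda>m. Xi \<gamma> g \<sigma> p0 lb m) has_real_derivative d) (at mb))"
proof -
  have cG: "continuous_on {p0..0} (Gam \<gamma>)"
    using Gam_continuous_on_piecewise[OF assms(3,4) _ _ assms(9,10)] assms(7,8) by (simp add: holder_on_def)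
  define c where "c = 2 * (SUP p\<in>{p0..0}. Gam \<gamma> p)"
  have "bdd_above (Gam \<gamma> ` {p0..0})"
    by (rule bounded_imp_bdd_above[OF bounded_continuous_image_Icc[OF cG]])
  then have "2 * Gam \<gamma> p \<le> c" if "p \<in> {p0..0}" for p
    unfolding c_def using cSUP_upper[OF that] by simp
  then interpret xi_setting \<gamma> p0 c
    by unfold_locales (use assms(3,4) cG in \<open>auto simp: Gam_def\<close>)
  have l0: "c < lam0" using assms(11) unfolding c_def .
  then have l: "c < lb" using assms(13) by simp
  have "integral {p0..0} (zcoef lb) \<le> 1 / g"
    using integral_zcoef_antimono[OF l0 assms(13)] assms(12) by (simp add: zcoef_def[abs_def])
  then show ?thesis
    using Xi_deriv_lam_pos[OF l _ assms(15)] Xi_deriv_mu_neg[OF l assms(14,1) _ assms(15)] assms(14) by auto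
qed

end
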